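(* Let $G$ be an ample Hausdorff groupoid, let $R$ be a commutative unital ring with the discrete topology, let $T \le R^\times$, let $(\Sigma,i,q)$ be a topologically trivial discrete twist by $T$ over $G$, and let $P\colon G \to \Sigma$ be any continuous global section. Then for $f, g \in A_R(G;\Sigma)$ the formula \[ (f *_\Sigma g)(\varepsilon) := \sum_{\gamma \in G^{s(q(\varepsilon))}} f(\varepsilon P(\gamma))\, g(P(\gamma)^{-1}) \] is a finite sum, is independent of the choice of $P$, and defines an element of $A_R(G;\Sigma)$; with this multiplication $A_R(G;\Sigma)$ is an $R$-algebra. If $R$ has a $T$-inverse involution $r \mapsto \overline{r}$, then $f^*(\varepsilon) := \overline{f(\varepsilon^{-1})}$ defines an involution on $A_R(G;\Sigma)$ under which it is a $*$-algebra over $R$.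
   Context: Groupoids are locally compact Hausdorff topological groupoids; $G$ is ample if it has a basis of compact open bisections; $G^x = r^{-1}(x)$. A discrete twist by $T$ over $G$ is a sequence $G^{(0)} \times T \xrightarrow{i} \Sigma \xrightarrow{q} G$, where $T$ carries the discrete topology, $G^{(0)} \times T$ is the trivial group bundle with fibres $T$, $\Sigma$ is a Hausdorff groupoid with $\Sigma^{(0)} = i(G^{(0)} \times \{1\})$, and $i, q$ are continuous groupoid homomorphisms restricting to homeomorphisms of unit spaces, such that: (1) $i(\{x\} \times T) = q^{-1}(x)$ for all $x$, $i$ injective, $q$ a quotient map; (2) for each $\alpha \in G$ there are an open bisection $B_\alpha \ni \alpha$ and continuous $P_\alpha\colon B_\alpha \to \Sigma$ with $q\circ P_\alpha = \mathrm{id}$ such that $(\beta,z) \mapsto i(r(\beta),z)P_\alpha(\beta)$ is a homeomorphism $B_\alpha \times T \to q^{-1}(B_\alpha)$; (3) $i(r(\varepsilon),z)\varepsilon = \varepsilon\, i(s(\varepsilon),z)$. $T$ acts on $\Sigma$ by $z\cdot\varepsilon := i(r(\varepsilon),z)\varepsilon$. A continuous global section is a continuous $P\colon G \to \Sigma$ with $q\circ P = \mathrm{id}_G$ and $P(G^{(0)}) \subseteq \Sigma^{(0)}$; the twist is topologically trivial if one exists. $A_R(G;\Sigma)$ is the $R$-module (pointwise operations) of continuous $f\colon\Sigma\to R$ that are $T$-equivariant ($f(z\cdot\varepsilon) = zf(\varepsilon)$) and such that $\overline{q(\{f\neq0\})}$ is compact. A $T$-inverse involution on $R$ is a ring involution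 $r\mapsto\overline{r}$ with $\overline{z} = z^{-1}$ for $z\in T$. *)

theory Defs
  imports "HOL-Analysis.Analysis"
begin

record 'a tgroupoid =
  gcarrier :: "'a set"
  gr :: "'a \<Rightarrow> 'a"
  gs :: "'a \<Rightarrow> 'a"
  gmult :: "'a \<Rightarrow> 'a \<Rightarrow> 'a"
  ginv :: "'a \<Rightarrow> 'a"
  gtop :: "'a topology"

definition gunits :: "('a, 'b) tgroupoid_scheme \<Rightarrow> 'a set" where
  "gunits G = gr G ` gcarrier G"

definition composable :: "('a, 'b) tgroupoid_scheme \<Rightarrow> ('a \<times> 'a) set" where
  "composable G = {(a, b). a \<in> gcarrier G \<and> b \<in> gcarrier G \<and> gs G a = gr G b}"

definition groupoid :: "('a, 'b) tgroupoid_scheme \<Rightarrow> bool" where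
  "groupoid G \<longleftrightarrow>
     (\<forall>a\<in>gcarrier G. gr G a \<in> gcarrier G \<and> gs G a \<in> gcarrier G \<and> ginv G a \<in> gcarrier G) \<and>
     (\<forall>a\<in>gcarrier G. gr G (gr G a) = gr G a \<and> gs G (gr G a) = gr G a \<and>
                      gr G (gs G a) = gs G a \<and> gs G (gs G a) = gs G a) \<and>
     (\<forall>(a, b)\<in>composable G. gmult G a b \<in> gcarrier G \<and>
                      gr G (gmult G a b) = gr G a \<and> gs G (gmult G a b) = gs G b) \<and>
     (\<forall>a\<in>gcarrier G. \<forall>b\<in>gcarrier G. \<forall>c\<in>gcarrier G.
        gs G a = gr G b \<and> gs G b = gr G c \<longrightarrow>
        gmult G (gmult G a b) c = gmult G a (gmult G b c)) \<and>
     (\<forall>a\<in>gcarrier G. gmult G (gr G a) a = a \<and> gmult G a (gs G a) = a) \<and>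
     (\<forall>a\<in>gcarrier G. gr G (ginv G a) = gs G a \<and> gs G (ginv G a) = gr G a \<and>
                      gmult G a (ginv G a) = gr G a \<and> gmult G (ginv G a) a = gs G a)"

definition topological_groupoid :: "('a, 'b) tgroupoid_scheme \<Rightarrow> bool" where
  "topological_groupoid G \<longleftrightarrow> groupoid G \<and> topspace (gtop G) = gcarrier G \<and>
     continuous_map (subtopology (prod_topology (gtop G) (gtop G)) (composable G)) (gtop G)
       (\<lambda>(a, b). gmult G a b) \<and>
     continuous_map (gtop G) (gtop G) (ginv G)"

definition bisection :: "('a, 'b) tgroupoid_scheme \<Rightarrow> 'a set \<Rightarrow> bool" where
  "bisection G B \<longleftrightarrow> B \<subseteq> gcarrier G \<and>
     openin (subtopology (gtop G) (gunits G)) (gr G ` B) \<and>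
     homeomorphic_map (subtopology (gtop G) B) (subtopology (gtop G) (gr G ` B)) (gr G) \<and>
     openin (subtopology (gtop G) (gunits G)) (gs G ` B) \<and>
     homeomorphic_map (subtopology (gtop G) B) (subtopology (gtop G) (gs G ` B)) (gs G)"

definition lch_groupoid :: "('a, 'b) tgroupoid_scheme \<Rightarrow> bool" where
  "lch_groupoid G \<longleftrightarrow> topological_groupoid G \<and> Hausdorff_space (gtop G) \<and>
     locally_compact_space (gtop G)"

definition ample_groupoid :: "('a, 'b) tgroupoid_scheme \<Rightarrow> bool" where
  "ample_groupoid G \<longleftrightarrow> lch_groupoid G \<and>
     (\<forall>U. openin (gtop G) U \<longrightarrow> (\<forall>x\<in>U. \<exists>B. compactin (gtop G) B \<and> openin (gtop G) B \<and>
          bisection G B \<and> x \<in> B \<and> B \<subseteq> U))"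

definition groupoid_hom ::
  "('a, 'c) tgroupoid_scheme \<Rightarrow> ('b, 'd) tgroupoid_scheme \<Rightarrow> ('a \<Rightarrow> 'b) \<Rightarrow> bool" where
  "groupoid_hom G H \<phi> \<longleftrightarrow> (\<forall>a\<in>gcarrier G. \<phi> a \<in> gcarrier H) \<and>
     (\<forall>(a, b)\<in>composable G. (\<phi> a, \<phi> b) \<in> composable H \<and>
        \<phi> (gmult G a b) = gmult H (\<phi> a) (\<phi> b))"

definition unit_subgroup :: "'r::comm_ring_1 set \<Rightarrow> bool" where
  "unit_subgroup T \<longleftrightarrow> 1 \<in> T \<and> (\<forall>z\<in>T. \<forall>w\<in>T. z * w \<in> T) \<and> (\<forall>z\<in>T. \<exists>w\<in>T. z * w = 1)"

definition trivial_bundle :: "('g, 'b) tgroupoid_scheme \<Rightarrow> 'r::comm_ring_1 set \<Rightarrow> ('g \<times> 'r) tgroupoid" where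
  "trivial_bundle G T =
     \<lparr> gcarrier = gunits G \<times> T,
       gr = (\<lambda>(x, z). (x, 1)),
       gs = (\<lambda>(x, z). (x, 1)),
       gmult = (\<lambda>(x, z) (y, w). (x, z * w)),
       ginv = (\<lambda>(x, z). (x, SOME w. w \<in> T \<and> z * w = 1)),
       gtop = prod_topology (subtopology (gtop G) (gunits G)) (discrete_topology T) \<rparr>"

definition discrete_twist ::
  "('g, 'b) tgroupoid_scheme \<Rightarrow> 'r::comm_ring_1 set \<Rightarrow> ('s, 'c) tgroupoid_scheme \<Rightarrow>
     ('g \<times> 'r \<Rightarrow> 's) \<Rightarrow> ('s \<Rightarrow> 'g) \<Rightarrow> bool" where
  "discrete_twist G T S i q \<longleftrightarrow>
     lch_groupoid G \<and>
     topological_groupoid S \<and> Hausdorff_space (gtop S) \<and>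
     gunits S = i ` (gunits G \<times> {1}) \<and>
     continuous_map (gtop (trivial_bundle G T)) (gtop S) i \<and>
     groupoid_hom (trivial_bundle G T) S i \<and>
     homeomorphic_map (subtopology (gtop (trivial_bundle G T)) (gunits G \<times> {1}))
                      (subtopology (gtop S) (gunits S)) i \<and>
     continuous_map (gtop S) (gtop G) q \<and>
     groupoid_hom S G q \<and>
     homeomorphic_map (subtopology (gtop S) (gunits S)) (subtopology (gtop G) (gunits G)) q \<and>
     \<comment> \<open>(1)\<close>
     (\<forall>x\<in>gunits G. i ` ({x} \<times> T) = {e \<in> gcarrier S. q e = x}) \<and>
     inj_on i (gunits G \<times> T) \<and>
     quotient_map (gtop S) (gtop G) q \<and>
     \<comment> \<open>(2) local triviality\<close>
     (\<forall>\<alpha>\<in>gcarrier G. \<exists>B Pa. openin (gtop G) B \<and> bisection G B \<and> \<alpha> \<in> B \<and>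
         continuous_map (subtopology (gtop G) B) (gtop S) Pa \<and>
         (\<forall>\<beta>\<in>B. q (Pa \<beta>) = \<beta>) \<and>
         homeomorphic_map (prod_topology (subtopology (gtop G) B) (discrete_topology T))
            (subtopology (gtop S) {e \<in> gcarrier S. q e \<in> B})
            (\<lambda>(\<beta>, z). gmult S (i (gr G \<beta>, z)) (Pa \<beta>))) \<and>
     \<comment> \<open>(3) centrality; r(e) in Sigma^(0) is identified with r(q e) in G^(0)\<close>
     (\<forall>e\<in>gcarrier S. \<forall>z\<in>T. gmult S (i (gr G (q e), z)) e = gmult S e (i (gs G (q e), z)))"

definition tact ::
  "('g, 'b) tgroupoid_scheme \<Rightarrow> ('s, 'c) tgroupoid_scheme \<Rightarrow> ('g \<times> 'r \<Rightarrow> 's) \<Rightarrow> ('s \<Rightarrow> 'g) \<Rightarrow>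
     'r \<Rightarrow> 's \<Rightarrow> 's" where
  "tact G S i q z e = gmult S (i (gr G (q e), z)) e"

definition continuous_global_section ::
  "('g, 'b) tgroupoid_scheme \<Rightarrow> ('s, 'c) tgroupoid_scheme \<Rightarrow> ('s \<Rightarrow> 'g) \<Rightarrow> ('g \<Rightarrow> 's) \<Rightarrow> bool" where
  "continuous_global_section G S q P \<longleftrightarrow> continuous_map (gtop G) (gtop S) P \<and>
     (\<forall>\<gamma>\<in>gcarrier G. q (P \<gamma>) = \<gamma>) \<and> P ` gunits G \<subseteq> gunits S"

definition topologically_trivial ::
  "('g, 'b) tgroupoid_scheme \<Rightarrow> ('s, 'c) tgroupoid_scheme \<Rightarrow> ('s \<Rightarrow> 'g) \<Rightarrow> bool" where
  "topologically_trivial G S q \<longleftrightarrow> (\<exists>P. continuous_global_section G S q P)"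

text \<open>Elements of A_R(G;Sigma); functions are taken to vanish off the carrier of Sigma
  (so that equality of elements is equality of HOL functions).  R is discrete.\<close>
definition twisted_steinberg ::
  "('g, 'b) tgroupoid_scheme \<Rightarrow> 'r::comm_ring_1 set \<Rightarrow> ('s, 'c) tgroupoid_scheme \<Rightarrow>
     ('g \<times> 'r \<Rightarrow> 's) \<Rightarrow> ('s \<Rightarrow> 'g) \<Rightarrow> ('s \<Rightarrow> 'r) set" where
  "twisted_steinberg G T S i q =
     {f. continuous_map (gtop S) (discrete_topology UNIV) f \<and>
         (\<forall>e\<in>gcarrier S. \<forall>z\<in>T. f (tact G S i q z e) = z * f e) \<and>
         compactin (gtop G) ((gtop G) closure_of (q ` {e \<in> gcarrier S. f e \<noteq> 0})) \<and>
         (\<forall>e. e \<notin> gcarrier S \<longrightarrow> f e = 0)}"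

definition conv_summand ::
  "('s, 'c) tgroupoid_scheme \<Rightarrow> ('g \<Rightarrow> 's) \<Rightarrow> ('s \<Rightarrow> 'r::comm_ring_1) \<Rightarrow> ('s \<Rightarrow> 'r) \<Rightarrow> 's \<Rightarrow> 'g \<Rightarrow> 'r" where
  "conv_summand S P f g e \<gamma> = f (gmult S e (P \<gamma>)) * g (ginv S (P \<gamma>))"

definition conv_support ::
  "('g, 'b) tgroupoid_scheme \<Rightarrow> ('s, 'c) tgroupoid_scheme \<Rightarrow> ('s \<Rightarrow> 'g) \<Rightarrow> ('g \<Rightarrow> 's) \<Rightarrow>
     ('s \<Rightarrow> 'r::comm_ring_1) \<Rightarrow> ('s \<Rightarrow> 'r) \<Rightarrow> 's \<Rightarrow> 'g set" where
  "conv_support G S q P f g e =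
     {\<gamma> \<in> gcarrier G. gr G \<gamma> = gs G (q e) \<and> conv_summand S P f g e \<gamma> \<noteq> 0}"

definition tconv ::
  "('g, 'b) tgroupoid_scheme \<Rightarrow> ('s, 'c) tgroupoid_scheme \<Rightarrow> ('s \<Rightarrow> 'g) \<Rightarrow> ('g \<Rightarrow> 's) \<Rightarrow>
     ('s \<Rightarrow> 'r::comm_ring_1) \<Rightarrow> ('s \<Rightarrow> 'r) \<Rightarrow> 's \<Rightarrow> 'r" where
  "tconv G S q P f g = (\<lambda>e. if e \<in> gcarrier S
       then (\<Sum>\<gamma>\<in>conv_support G S q P f g e. conv_summand S P f g e \<gamma>) else 0)"

definition tstar ::
  "('s, 'c) tgroupoid_scheme \<Rightarrow> ('r \<Rightarrow> 'r) \<Rightarrow> ('s \<Rightarrow> 'r::comm_ring_1) \<Rightarrow> 's \<Rightarrow> 'r" where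
  "tstar S bar f = (\<lambda>e. if e \<in> gcarrier S then bar (f (ginv S e)) else 0)"

definition R_algebra_on :: "('s \<Rightarrow> 'r::comm_ring_1) set \<Rightarrow> (('s \<Rightarrow> 'r) \<Rightarrow> ('s \<Rightarrow> 'r) \<Rightarrow> ('s \<Rightarrow> 'r)) \<Rightarrow> bool" where
  "R_algebra_on A m \<longleftrightarrow>
     (\<lambda>_. 0) \<in> A \<and>
     (\<forall>f\<in>A. \<forall>g\<in>A. (\<lambda>e. f e + g e) \<in> A) \<and>
     (\<forall>c. \<forall>f\<in>A. (\<lambda>e. c * f e) \<in> A) \<and>
     (\<forall>f\<in>A. \<forall>g\<in>A. m f g \<in> A) \<and>
     (\<forall>f\<in>A. \<forall>g\<in>A. \<forall>h\<in>A. m (m f g) h = m f (m g h)) \<and>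
     (\<forall>f\<in>A. \<forall>g\<in>A. \<forall>h\<in>A. m f (\<lambda>e. g e + h e) = (\<lambda>e. m f g e + m f h e)) \<and>
     (\<forall>f\<in>A. \<forall>g\<in>A. \<forall>h\<in>A. m (\<lambda>e. f e + g e) h = (\<lambda>e. m f h e + m g h e)) \<and>
     (\<forall>c. \<forall>f\<in>A. \<forall>g\<in>A. m (\<lambda>e. c * f e) g = (\<lambda>e. c * m f g e) \<and>
                         m f (\<lambda>e. c * g e) = (\<lambda>e. c * m f g e))"

definition ring_involution :: "('r::comm_ring_1 \<Rightarrow> 'r) \<Rightarrow> bool" where
  "ring_involution bar \<longleftrightarrow> (\<forall>a b. bar (a + b) = bar a + bar b) \<and>
     (\<forall>a b. bar (a * b) = bar b * bar a) \<and> bar 1 = 1 \<and> (\<forall>a. bar (bar a) = a)"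

definition T_inverse_involution :: "'r::comm_ring_1 set \<Rightarrow> ('r \<Rightarrow> 'r) \<Rightarrow> bool" where
  "T_inverse_involution T bar \<longleftrightarrow> ring_involution bar \<and> (\<forall>z\<in>T. z * bar z = 1)"

definition star_algebra_on ::
  "('s \<Rightarrow> 'r::comm_ring_1) set \<Rightarrow> (('s \<Rightarrow> 'r) \<Rightarrow> ('s \<Rightarrow> 'r) \<Rightarrow> ('s \<Rightarrow> 'r)) \<Rightarrow>
     (('s \<Rightarrow> 'r) \<Rightarrow> ('s \<Rightarrow> 'r)) \<Rightarrow> ('r \<Rightarrow> 'r) \<Rightarrow> bool" where
  "star_algebra_on A m st bar \<longleftrightarrow> R_algebra_on A m \<and>
     (\<forall>f\<in>A. st f \<in> A) \<and>
     (\<forall>f\<in>A. st (st f) = f) \<and>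
     (\<forall>f\<in>A. \<forall>g\<in>A. st (\<lambda>e. f e + g e) = (\<lambda>e. st f e + st g e)) \<and>
     (\<forall>c. \<forall>f\<in>A. st (\<lambda>e. c * f e) = (\<lambda>e. bar c * st f e)) \<and>
     (\<forall>f\<in>A. \<forall>g\<in>A. st (m f g) = m (st g) (st f))"

end

theory Submission
  imports Defs
begin

text \<open>
  An element f of A_R(G;\<Sigma>) vanishes outside the preimage of a compact set supp f \<subseteq> G,
  and in an ample Hausdorff groupoid a compact set meets each range fibre G^x in a compact
  discrete, hence finite, set: all convolution sums are finite.  A summand
  f(\<epsilon> P(\<gamma>)) g(P(\<gamma>)^-1) is unchanged when P(\<gamma>) is replaced by another lift
  z \<cdot> P(\<gamma>), because T-equivariance multiplies the two factors by z and z^-1.  Hence the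
  sum does not depend on P, and translating the index by q(\<epsilon>) rewrites it as the sum of
  f(P \<alpha>) g(P(\<alpha>)^-1 \<epsilon>) over \<alpha> \<in> G^r(q \<epsilon>).  In this form associativity is an
  interchange of two finite sums, and local constancy holds because near any point the
  contributing indices move along finitely many open bisections.  The involution reverses
  products since inversion in \<Sigma> is an anti-automorphism compatible with the T-action.
\<close>

section \<open>Finitely supported sums and discrete-valued maps\<close>

text \<open>Meaningful only when the support of h in X is finite; otherwise \<open>sum\<close> yields the junk
  value 0.\<close>
definition fsum :: "('a \<Rightarrow> 'b::comm_monoid_add) \<Rightarrow> 'a set \<Rightarrow> 'b" where
  "fsum h X = sum h {x \<in> X. h x \<noteq> 0}"

lemma fsum_eq_sum:
  assumes "finite F" "F \<subseteq> X" "\<And>x. x \<in> X \<Longrightarrow> x \<notin> F \<Longrightarrow> h x = 0"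
  shows "fsum h X = sum h F"
  unfolding fsum_def by (rule sum.mono_neutral_right[symmetric]) (use assms in auto)

lemma fsum_cong: "(\<And>x. x \<in> X \<Longrightarrow> h x = h' x) \<Longrightarrow> fsum h X = fsum h' X"
  unfolding fsum_def by (rule sum.cong) auto

lemma bij_betw_support:
  assumes "bij_betw \<phi> X Y" "\<And>x. x \<in> X \<Longrightarrow> h' (\<phi> x) = h x"
  shows "bij_betw \<phi> {x \<in> X. h x \<noteq> 0} {y \<in> Y. h' y \<noteq> 0}"
proof (rule bij_betw_subset[OF assms(1)])
  show "\<phi> ` {x \<in> X. h x \<noteq> 0} = {y \<in> Y. h' y \<noteq> 0}"
  proof (intro equalityI subsetI)
    fix y assume "y \<in> {y \<in> Y. h' y \<noteq> 0}"
    then obtain x where "x \<in> X" "y = \<phi> x" "h' y \<noteq> 0"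
      using assms(1) unfolding bij_betw_def by auto
    then show "y \<in> \<phi> ` {x \<in> X. h x \<noteq> 0}" using assms(2) by auto
  next
    fix y assume "y \<in> \<phi> ` {x \<in> X. h x \<noteq> 0}"
    then obtain x where "x \<in> X" "h x \<noteq> 0" "y = \<phi> x" by blast
    then show "y \<in> {y \<in> Y. h' y \<noteq> 0}" using assms bij_betw_apply by fastforce
  qed
qed auto

lemma fsum_reindex_bij_betw:
  assumes "bij_betw \<phi> X Y" "\<And>x. x \<in> X \<Longrightarrow> h' (\<phi> x) = h x"
  shows "fsum h X = fsum h' Y"
proof -
  have "fsum h' Y = sum (\<lambda>x. h' (\<phi> x)) {x \<in> X. h x \<noteq> 0}"
    unfolding fsum_def
    by (rule sum.reindex_bij_betw[OF bij_betw_support[of \<phi> X Y h' h, OF assms], symmetric])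
  also have "\<dots> = fsum h X"
    unfolding fsum_def using assms(2) by (auto intro!: sum.cong)
  finally show ?thesis by simp
qed

lemma fsum_not_neutral_contains_not_neutral: "fsum h X \<noteq> 0 \<Longrightarrow> \<exists>x\<in>X. h x \<noteq> 0"
proof (rule ccontr)
  assume "fsum h X \<noteq> 0" "\<not> (\<exists>x\<in>X. h x \<noteq> 0)"
  then show False unfolding fsum_def by simp
qed

lemma fsum_distrib_left:
  fixes h :: "'a \<Rightarrow> 'b::semiring_0"
  assumes "finite {x \<in> X. h x \<noteq> 0}"
  shows "fsum (\<lambda>x. c * h x) X = c * fsum h X"
proof -
  have "fsum (\<lambda>x. c * h x) X = sum (\<lambda>x. c * h x) {x \<in> X. h x \<noteq> 0}"
    by (rule fsum_eq_sum) (use assms in auto)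
  then show ?thesis unfolding fsum_def by (simp add: sum_distrib_left)
qed

lemma fsum_add:
  assumes "finite {x \<in> X. h1 x \<noteq> 0}" "finite {x \<in> X. h2 x \<noteq> 0}"
  shows "fsum (\<lambda>x. h1 x + h2 x) X = fsum h1 X + fsum h2 X"
proof -
  let ?F = "{x \<in> X. h1 x \<noteq> 0} \<union> {x \<in> X. h2 x \<noteq> 0}"
  have F: "finite ?F" "?F \<subseteq> X" using assms by auto
  have "fsum (\<lambda>x. h1 x + h2 x) X = sum (\<lambda>x. h1 x + h2 x) ?F"
    by (rule fsum_eq_sum[OF F]) auto
  moreover have "fsum h1 X = sum h1 ?F" "fsum h2 X = sum h2 ?F"
    by (rule fsum_eq_sum[OF F]; auto)+
  ultimately show ?thesis by (simp add: sum.distrib)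
qed

lemma fsum_comp_morphism:
  assumes "b 0 = 0" "\<And>x y. b (x + y) = b x + b y" "\<And>x. b x = 0 \<Longrightarrow> x = 0"
  shows "b (fsum h X) = fsum (\<lambda>x. b (h x)) X"
proof -
  have "{x \<in> X. b (h x) \<noteq> 0} = {x \<in> X. h x \<noteq> 0}" using assms by auto
  then show ?thesis
    unfolding fsum_def using sum_comp_morphism[of b h, OF assms(1,2)] by (simp add: comp_def)
qed

lemma continuous_map_discrete_combine:
  assumes "continuous_map X (discrete_topology UNIV) f" "continuous_map X (discrete_topology UNIV) g"
  shows "continuous_map X (discrete_topology UNIV) (\<lambda>x. h (f x) (g x))"
proof -
  have "continuous_map X (discrete_topology UNIV) (\<lambda>x. (f x, g x))"
    using continuous_map_pairedI[OF assms] by (simp add: prod_topology_discrete_topology[symmetric])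
  then have "continuous_map X (discrete_topology UNIV) ((\<lambda>(a, b). h a b) \<circ> (\<lambda>x. (f x, g x)))"
    by (rule continuous_map_compose) simp
  then show ?thesis by (simp add: comp_def)
qed

lemma continuous_map_discrete_if_locally_constant:
  assumes "\<And>x. x \<in> topspace X \<Longrightarrow> \<exists>U. openin X U \<and> x \<in> U \<and> (\<forall>y\<in>U. f y = f x)"
  shows "continuous_map X (discrete_topology UNIV) f"
proof -
  have "openin X {x \<in> topspace X. f x \<in> V}" for V
  proof (rule openin_subopen[THEN iffD2], rule ballI)
    fix x assume x: "x \<in> {x \<in> topspace X. f x \<in> V}"
    obtain U where U: "openin X U" "x \<in> U" "\<forall>y\<in>U. f y = f x"
      using assms[of x] x by blast
    have "f y \<in> V" if "y \<in> U" for y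
      using x U(3) that by (metis (mono_tags) mem_Collect_eq)
    then have "U \<subseteq> {x \<in> topspace X. f x \<in> V}"
      using openin_subset[OF U(1)] by blast
    with U show "\<exists>T. openin X T \<and> x \<in> T \<and> T \<subseteq> {x \<in> topspace X. f x \<in> V}" by blast
  qed
  then show ?thesis by (simp add: continuous_map)
qed

lemma openin_level_set:
  assumes "continuous_map (subtopology X N) (discrete_topology UNIV) h" "openin X N"
  shows "openin X {e \<in> N. h e = c}"
proof -
  have "openin (subtopology X N) {e \<in> topspace (subtopology X N). h e \<in> {c}}"
    by (rule openin_continuous_map_preimage[OF assms(1)]) simp
  moreover have "{e \<in> topspace (subtopology X N). h e \<in> {c}} = {e \<in> N. h e = c}"
    using openin_subset[OF assms(2)] by auto
  ultimately show ?thesis using openin_trans_full assms(2) by metis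
qed

lemma compactin_closure_of_subset:
  assumes "Hausdorff_space X" "compactin X K" "B \<subseteq> K"
  shows "compactin X (X closure_of B)"
proof -
  have "X closure_of B \<subseteq> K"
    using assms closure_of_minimal compactin_imp_closedin by blast
  then show ?thesis using closed_compactin[OF assms(2)] by simp
qed

section \<open>Groupoids\<close>

locale groupoid_struct =
  fixes G :: "('a, 'b) tgroupoid_scheme"
  assumes groupoid: "groupoid G"
begin

abbreviation "C \<equiv> gcarrier G"
abbreviation "r \<equiv> gr G"
abbreviation "s \<equiv> gs G"
abbreviation "m \<equiv> gmult G"
abbreviation "iv \<equiv> ginv G"

lemma r_in [simp]: "a \<in> C \<Longrightarrow> r a \<in> C"
  and s_in [simp]: "a \<in> C \<Longrightarrow> s a \<in> C"
  and iv_in [simp]: "a \<in> C \<Longrightarrow> iv a \<in> C"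
  and r_r [simp]: "a \<in> C \<Longrightarrow> r (r a) = r a"
  and s_r [simp]: "a \<in> C \<Longrightarrow> s (r a) = r a"
  and r_s [simp]: "a \<in> C \<Longrightarrow> r (s a) = s a"
  and s_s [simp]: "a \<in> C \<Longrightarrow> s (s a) = s a"
  and mult_r_left [simp]: "a \<in> C \<Longrightarrow> m (r a) a = a"
  and mult_s_right [simp]: "a \<in> C \<Longrightarrow> m a (s a) = a"
  and r_iv [simp]: "a \<in> C \<Longrightarrow> r (iv a) = s a"
  and s_iv [simp]: "a \<in> C \<Longrightarrow> s (iv a) = r a"
  and mult_iv_right [simp]: "a \<in> C \<Longrightarrow> m a (iv a) = r a"
  and mult_iv_left [simp]: "a \<in> C \<Longrightarrow> m (iv a) a = s a"
  using groupoid unfolding groupoid_def by auto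

lemma mult_in [simp]: "a \<in> C \<Longrightarrow> b \<in> C \<Longrightarrow> s a = r b \<Longrightarrow> m a b \<in> C"
  and r_mult [simp]: "a \<in> C \<Longrightarrow> b \<in> C \<Longrightarrow> s a = r b \<Longrightarrow> r (m a b) = r a"
  and s_mult [simp]: "a \<in> C \<Longrightarrow> b \<in> C \<Longrightarrow> s a = r b \<Longrightarrow> s (m a b) = s b"
  using groupoid unfolding groupoid_def composable_def by auto

lemma mult_assoc:
  "a \<in> C \<Longrightarrow> b \<in> C \<Longrightarrow> c \<in> C \<Longrightarrow> s a = r b \<Longrightarrow> s b = r c \<Longrightarrow> m (m a b) c = m a (m b c)"
  using groupoid unfolding groupoid_def by blast

lemma iv_mult_cancel_left:
  assumes "a \<in> C" "b \<in> C" "r b = s a"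
  shows "m (iv a) (m a b) = b"
proof -
  have "m (iv a) (m a b) = m (m (iv a) a) b"
    using assms by (intro mult_assoc[symmetric]) auto
  then show ?thesis using assms mult_r_left[of b] by simp
qed

lemma mult_iv_cancel_left:
  assumes "a \<in> C" "b \<in> C" "r b = r a"
  shows "m a (m (iv a) b) = b"
proof -
  have "m a (m (iv a) b) = m (m a (iv a)) b"
    using assms by (intro mult_assoc[symmetric]) auto
  then show ?thesis using assms mult_r_left[of b] by simp
qed

lemma cancel_left:
  assumes "a \<in> C" "b \<in> C" "c \<in> C" "s a = r b" "s a = r c" "m a b = m a c"
  shows "b = c"
  by (metis assms iv_mult_cancel_left)

lemma iv_unique: "a \<in> C \<Longrightarrow> b \<in> C \<Longrightarrow> s a = r b \<Longrightarrow> m a b = r a \<Longrightarrow> b = iv a"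
  by (rule cancel_left[of a]) auto

lemma iv_iv [simp]: "a \<in> C \<Longrightarrow> iv (iv a) = a"
  by (rule cancel_left[of "iv a"]) auto

lemma iv_mult:
  assumes a: "a \<in> C" and b: "b \<in> C" and ab: "s a = r b"
  shows "iv (m a b) = m (iv b) (iv a)"
proof (rule iv_unique[symmetric])
  have "m (m a b) (m (iv b) (iv a)) = m a (m b (m (iv b) (iv a)))"
    using assms by (intro mult_assoc) auto
  also have "\<dots> = m a (iv a)"
    using assms mult_iv_cancel_left[of b "iv a"] by simp
  finally show "m (m a b) (m (iv b) (iv a)) = r (m a b)" using assms by simp
qed (use assms in auto)

lemma iv_mult_cancel_right:
  assumes "a \<in> C" "b \<in> C" "s a = r b"
  shows "m (iv (m a b)) a = iv b"
proof -
  have "m (iv (m a b)) a = m (m (iv b) (iv a)) a"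
    using assms iv_mult by simp
  also have "\<dots> = m (iv b) (m (iv a) a)"
    using assms by (intro mult_assoc) auto
  finally show ?thesis using assms mult_s_right[of "iv b"] by simp
qed

lemma iv_left_quotient:
  assumes "a \<in> C" "b \<in> C" "c \<in> C" "r a = r c" "r b = r c"
  shows "m (iv (m (iv a) b)) (m (iv a) c) = m (iv b) c"
proof -
  have "m (iv (m (iv a) b)) (m (iv a) c) = m (m (iv b) a) (m (iv a) c)"
    using assms iv_mult[of "iv a" b] by simp
  also have "\<dots> = m (iv b) (m a (m (iv a) c))"
    using assms by (intro mult_assoc) auto
  also have "\<dots> = m (iv b) c"
    using assms mult_iv_cancel_left[of a c] by simp
  finally show ?thesis .
qed

lemma units_iff: "u \<in> gunits G \<longleftrightarrow> u \<in> C \<and> r u = u"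
  unfolding gunits_def by (auto intro: rev_image_eqI[of u])

lemma units_subset: "gunits G \<subseteq> C"
  by (auto simp: units_iff)

lemma s_unit: "u \<in> gunits G \<Longrightarrow> s u = u"
  unfolding gunits_def by auto

lemma r_in_units [simp]: "a \<in> C \<Longrightarrow> r a \<in> gunits G"
  and s_in_units [simp]: "a \<in> C \<Longrightarrow> s a \<in> gunits G"
  by (auto simp: units_iff)

definition rfibre :: "'a \<Rightarrow> 'a set" where
  "rfibre x = {a \<in> C. r a = x}"

lemma rfibre_iff: "a \<in> rfibre x \<longleftrightarrow> a \<in> C \<and> r a = x"
  by (simp add: rfibre_def)

lemma bij_betw_mult_rfibre: "a \<in> C \<Longrightarrow> bij_betw (m a) (rfibre (s a)) (rfibre (r a))"
  by (rule bij_betw_byWitness[where f' = "m (iv a)"])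
     (auto simp: rfibre_iff iv_mult_cancel_left mult_iv_cancel_left)

definition setmult :: "'a set \<Rightarrow> 'a set \<Rightarrow> 'a set" where
  "setmult K L = (\<lambda>(a, b). m a b) ` ((K \<times> L) \<inter> composable G)"

lemma setmultI: "a \<in> K \<Longrightarrow> b \<in> L \<Longrightarrow> a \<in> C \<Longrightarrow> b \<in> C \<Longrightarrow> s a = r b \<Longrightarrow> m a b \<in> setmult K L"
  unfolding setmult_def composable_def by (rule rev_image_eqI[of "(a, b)"]) auto

end

locale topological_groupoid_struct = groupoid_struct +
  assumes topological: "topological_groupoid G"
begin

lemma topspace_eq [simp]: "topspace (gtop G) = C"
  and continuous_mult:
    "continuous_map (subtopology (prod_topology (gtop G) (gtop G)) (composable G)) (gtop G)
       (\<lambda>(a, b). m a b)"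
  and continuous_iv: "continuous_map (gtop G) (gtop G) iv"
  using topological unfolding topological_groupoid_def by simp_all

lemma continuous_r: "continuous_map (gtop G) (gtop G) r"
  and continuous_s: "continuous_map (gtop G) (gtop G) s"
proof -
  have "continuous_map (gtop G) (subtopology (prod_topology (gtop G) (gtop G)) (composable G))
      (\<lambda>a. (a, iv a))"
    and "continuous_map (gtop G) (subtopology (prod_topology (gtop G) (gtop G)) (composable G))
      (\<lambda>a. (iv a, a))"
    by (auto simp: composable_def intro!: continuous_map_into_subtopology continuous_map_pairedI
        continuous_iv)
  then have "continuous_map (gtop G) (gtop G) ((\<lambda>(a, b). m a b) \<circ> (\<lambda>a. (a, iv a)))"
    and "continuous_map (gtop G) (gtop G) ((\<lambda>(a, b). m a b) \<circ> (\<lambda>a. (iv a, a)))"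
    by (auto intro: continuous_map_compose continuous_mult)
  then show "continuous_map (gtop G) (gtop G) r" "continuous_map (gtop G) (gtop G) s"
    by (auto elim: continuous_map_eq)
qed

end

locale ample_groupoid_struct = topological_groupoid_struct +
  assumes ample: "ample_groupoid G"
begin

lemma hausdorff: "Hausdorff_space (gtop G)"
  using ample unfolding ample_groupoid_def lch_groupoid_def by simp

lemma open_bisection_nbhd: "a \<in> C \<Longrightarrow> \<exists>B. openin (gtop G) B \<and> bisection G B \<and> a \<in> B"
  using ample openin_topspace[of "gtop G"] unfolding ample_groupoid_def by fastforce

lemma inj_on_r_bisection: "bisection G B \<Longrightarrow> inj_on r B"
  unfolding bisection_def
  using homeomorphic_imp_injective_map[of "subtopology (gtop G) B" _ r] by (auto simp: Int_absorb1)

lemma closedin_rfibre: "x \<in> C \<Longrightarrow> closedin (gtop G) (rfibre x)"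
  using closedin_continuous_map_preimage[OF continuous_r closedin_Hausdorff_singleton[OF hausdorff]]
  by (simp add: rfibre_def)

text \<open>The intersection is compact, and discrete because r is injective on bisections.\<close>
lemma finite_rfibre_Int_compactin:
  assumes x: "x \<in> C" and K: "compactin (gtop G) K"
  shows "finite (rfibre x \<inter> K)"
proof -
  let ?Y = "rfibre x \<inter> K"
  have isolated: "y \<notin> gtop G derived_set_of ?Y" if "y \<in> ?Y" for y
  proof
    assume "y \<in> gtop G derived_set_of ?Y"
    moreover obtain B where B: "openin (gtop G) B" "bisection G B" "y \<in> B"
      using open_bisection_nbhd \<open>y \<in> ?Y\<close> by (auto simp: rfibre_iff)
    ultimately obtain z where "z \<noteq> y" "z \<in> ?Y" "z \<in> B"
      by (auto simp: in_derived_set_of)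
    then show False
      using inj_onD[OF inj_on_r_bisection[OF B(2)], of z y] B(3) \<open>y \<in> ?Y\<close> by (auto simp: rfibre_iff)
  qed
  have "subtopology (gtop G) ?Y = discrete_topology ?Y"
    using isolated compactin_subset_topspace[OF K] by (intro subtopology_eq_discrete_topology) auto
  moreover have "compactin (subtopology (gtop G) ?Y) ?Y"
    using closed_Int_compactin[OF closedin_rfibre[OF x] K] by (simp add: compactin_subtopology)
  ultimately show ?thesis by (simp add: compactin_discrete_topology)
qed

lemma compactin_setmult:
  assumes K: "compactin (gtop G) K" and L: "compactin (gtop G) L"
  shows "compactin (gtop G) (setmult K L)"
proof -
  let ?X = "prod_topology (gtop G) (gtop G)"
  have "closedin ?X {p \<in> topspace ?X. (s \<circ> fst) p = (r \<circ> snd) p}"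
    by (rule closedin_continuous_maps_eq[OF hausdorff continuous_map_compose[OF continuous_map_fst
        continuous_s] continuous_map_compose[OF continuous_map_snd continuous_r]])
  moreover have "{p \<in> topspace ?X. (s \<circ> fst) p = (r \<circ> snd) p} = composable G"
    by (auto simp: composable_def)
  ultimately have "compactin ?X ((K \<times> L) \<inter> composable G)"
    using closed_Int_compactin compactin_Times K L by (metis inf_commute)
  then have "compactin (subtopology ?X (composable G)) ((K \<times> L) \<inter> composable G)"
    by (simp add: compactin_subtopology)
  then show ?thesis
    unfolding setmult_def by (rule image_compactin[OF _ continuous_mult])
qed

lemma rfibre_compact_nbhd_covered:
  assumes K: "compactin (gtop G) K" and x: "x \<in> C"
    and B: "\<And>a. a \<in> rfibre x \<inter> K \<Longrightarrow> openin (gtop G) (B a) \<and> a \<in> B a"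
  obtains U where "openin (gtop G) U" "x \<in> U"
    "\<And>c. c \<in> K \<Longrightarrow> r c \<in> U \<Longrightarrow> \<exists>a \<in> rfibre x \<inter> K. c \<in> B a"
proof -
  define R where "R = r ` ((C - \<Union>(B ` (rfibre x \<inter> K))) \<inter> K)"
  have "closedin (gtop G) (C - \<Union>(B ` (rfibre x \<inter> K)))"
    using B closedin_topspace[of "gtop G"] by (intro closedin_diff) auto
  then have "compactin (gtop G) R"
    unfolding R_def by (intro image_compactin[OF _ continuous_r] closed_Int_compactin K)
  then have "openin (gtop G) (C - R)"
    using compactin_imp_closedin[OF hausdorff] by (simp add: closedin_def)
  moreover have "x \<notin> R"
    using B unfolding R_def by (force simp: rfibre_iff)
  moreover have "\<exists>a \<in> rfibre x \<inter> K. c \<in> B a" if "c \<in> K" "r c \<in> C - R" for c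
    using that compactin_subset_topspace[OF K] unfolding R_def by auto
  ultimately show ?thesis using that x by blast
qed

definition nbhd_bisection :: "'a \<Rightarrow> 'a set" where
  "nbhd_bisection a = (SOME B. openin (gtop G) B \<and> bisection G B \<and> a \<in> B)"

lemma nbhd_bisection:
  assumes "a \<in> C"
  shows "openin (gtop G) (nbhd_bisection a)" "bisection G (nbhd_bisection a)"
    "a \<in> nbhd_bisection a" "nbhd_bisection a \<subseteq> C"
proof -
  show "openin (gtop G) (nbhd_bisection a)" "bisection G (nbhd_bisection a)" "a \<in> nbhd_bisection a"
    unfolding nbhd_bisection_def using someI_ex[OF open_bisection_nbhd[OF assms]] by auto
  then show "nbhd_bisection a \<subseteq> C" unfolding bisection_def by blast
qed

definition local_r_section :: "'a \<Rightarrow> 'a \<Rightarrow> 'a" where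
  "local_r_section a = (SOME \<rho>. homeomorphic_maps (subtopology (gtop G) (nbhd_bisection a))
      (subtopology (gtop G) (r ` nbhd_bisection a)) r \<rho>)"

lemma local_r_section_maps:
  assumes "a \<in> C"
  shows "homeomorphic_maps (subtopology (gtop G) (nbhd_bisection a))
      (subtopology (gtop G) (r ` nbhd_bisection a)) r (local_r_section a)"
proof -
  have "homeomorphic_map (subtopology (gtop G) (nbhd_bisection a))
      (subtopology (gtop G) (r ` nbhd_bisection a)) r"
    using nbhd_bisection(2)[OF assms] unfolding bisection_def by blast
  then show ?thesis
    unfolding local_r_section_def homeomorphic_map_maps by (rule someI_ex)
qed

lemma continuous_local_r_section:
  "a \<in> C \<Longrightarrow> continuous_map (subtopology (gtop G) (r ` nbhd_bisection a))
     (subtopology (gtop G) (nbhd_bisection a)) (local_r_section a)"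
  using local_r_section_maps unfolding homeomorphic_maps_def by blast

lemma local_r_section_in:
  assumes "a \<in> C" "y \<in> r ` nbhd_bisection a"
  shows "local_r_section a y \<in> nbhd_bisection a" "r (local_r_section a y) = y"
  using local_r_section_maps[OF assms(1)] assms nbhd_bisection(4)[OF assms(1)]
  unfolding homeomorphic_maps_def continuous_map_def by auto

lemma local_r_section_r:
  "a \<in> C \<Longrightarrow> c \<in> nbhd_bisection a \<Longrightarrow> local_r_section a (r c) = c"
  using local_r_section_maps nbhd_bisection(4) unfolding homeomorphic_maps_def by fastforce

lemma openin_r_nbhd_bisection:
  "a \<in> C \<Longrightarrow> openin (subtopology (gtop G) (gunits G)) (r ` nbhd_bisection a)"
  using nbhd_bisection(2) unfolding bisection_def by blast

end

section \<open>Twists with a continuous global section\<close>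

locale twist_with_section =
  fixes G :: "'g tgroupoid" and T :: "'r::comm_ring_1 set" and S :: "'s tgroupoid"
    and i :: "'g \<times> 'r \<Rightarrow> 's" and q :: "'s \<Rightarrow> 'g" and P :: "'g \<Rightarrow> 's"
  assumes ample: "ample_groupoid G"
    and unit_subgroup: "unit_subgroup T"
    and twist: "discrete_twist G T S i q"
    and global_section: "continuous_global_section G S q P"

sublocale twist_with_section \<subseteq> G: ample_groupoid_struct G
  using ample
  by unfold_locales (simp_all add: ample_groupoid_def lch_groupoid_def topological_groupoid_def)

sublocale twist_with_section \<subseteq> S: topological_groupoid_struct S
  using twist
  by unfold_locales (simp_all add: discrete_twist_def topological_groupoid_def)

context twist_with_section
begin

abbreviation "UG \<equiv> gunits G"
abbreviation "US \<equiv> gunits S"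
abbreviation "act \<equiv> tact G S i q"
abbreviation "A \<equiv> twisted_steinberg G T S i q"

lemma units_S: "US = i ` (UG \<times> {1})"
  and i_hom: "groupoid_hom (trivial_bundle G T) S i"
  and q_hom: "groupoid_hom S G q"
  and q_homeomorphic_units:
    "homeomorphic_map (subtopology (gtop S) US) (subtopology (gtop G) UG) q"
  and i_fibre: "\<And>x. x \<in> UG \<Longrightarrow> i ` ({x} \<times> T) = {e \<in> S.C. q e = x}"
  and continuous_q: "continuous_map (gtop S) (gtop G) q"
  and central:
    "\<And>e z. e \<in> S.C \<Longrightarrow> z \<in> T \<Longrightarrow> S.m (i (G.r (q e), z)) e = S.m e (i (G.s (q e), z))"
  using twist unfolding discrete_twist_def by blast+

definition tinv :: "'r \<Rightarrow> 'r" where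
  "tinv z = (SOME w. w \<in> T \<and> z * w = 1)"

lemma tinv_in [simp]: "z \<in> T \<Longrightarrow> tinv z \<in> T"
  and mult_tinv [simp]: "z \<in> T \<Longrightarrow> z * tinv z = 1"
proof -
  assume "z \<in> T"
  then have "\<exists>w. w \<in> T \<and> z * w = 1" using unit_subgroup unfolding unit_subgroup_def by blast
  then have "tinv z \<in> T \<and> z * tinv z = 1" unfolding tinv_def by (rule someI_ex)
  then show "tinv z \<in> T" "z * tinv z = 1" by simp_all
qed

lemma i_in [simp]: "x \<in> UG \<Longrightarrow> z \<in> T \<Longrightarrow> i (x, z) \<in> S.C"
  using i_hom unfolding groupoid_hom_def trivial_bundle_def by auto

lemma q_i [simp]: "x \<in> UG \<Longrightarrow> z \<in> T \<Longrightarrow> q (i (x, z)) = x"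
  using i_fibre[of x] by auto

lemma i_mult:
  assumes "x \<in> UG" "z \<in> T" "w \<in> T"
  shows "S.s (i (x, z)) = S.r (i (x, w))" "S.m (i (x, z)) (i (x, w)) = i (x, z * w)"
proof -
  have "((x, z), (x, w)) \<in> composable (trivial_bundle G T)"
    using assms by (auto simp: composable_def trivial_bundle_def)
  then show "S.s (i (x, z)) = S.r (i (x, w))" "S.m (i (x, z)) (i (x, w)) = i (x, z * w)"
    using i_hom unfolding groupoid_hom_def by (auto simp: composable_def trivial_bundle_def)
qed

lemma q_in [simp]: "e \<in> S.C \<Longrightarrow> q e \<in> G.C"
  using q_hom unfolding groupoid_hom_def by auto

lemma q_mult:
  assumes "a \<in> S.C" "b \<in> S.C" "S.s a = S.r b"
  shows "G.s (q a) = G.r (q b)" "q (S.m a b) = G.m (q a) (q b)"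
  using q_hom assms unfolding groupoid_hom_def composable_def by auto

lemma q_unit: "u \<in> US \<Longrightarrow> q u \<in> UG"
  using homeomorphic_imp_surjective_map[OF q_homeomorphic_units] S.units_subset G.units_subset
  by (auto simp: Int_absorb1)

lemma q_r [simp]: "e \<in> S.C \<Longrightarrow> q (S.r e) = G.r (q e)"
proof -
  assume e: "e \<in> S.C"
  have "q (S.r e) = G.m (q e) (q (S.iv e))" "G.r (G.m (q e) (q (S.iv e))) = G.r (q e)"
    using q_mult[of e "S.iv e"] e by simp_all
  moreover have "q (S.r e) \<in> UG" using e q_unit by simp
  ultimately show ?thesis by (simp add: G.units_iff)
qed

lemma q_s [simp]: "e \<in> S.C \<Longrightarrow> q (S.s e) = G.s (q e)"
proof -
  assume e: "e \<in> S.C"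
  have "q (S.s e) = G.m (q (S.iv e)) (q e)" "G.s (G.m (q (S.iv e)) (q e)) = G.s (q e)"
    using q_mult[of "S.iv e" e] e by simp_all
  moreover have "q (S.s e) \<in> UG" using e q_unit by simp
  ultimately show ?thesis using G.s_unit by metis
qed

lemma q_iv [simp]: "e \<in> S.C \<Longrightarrow> q (S.iv e) = G.iv (q e)"
  using q_mult[of e "S.iv e"] by (intro G.iv_unique) auto

lemma unit_eq_i:
  assumes "u \<in> US" "q u = x"
  shows "u = i (x, 1)"
proof -
  have "inj_on q US"
    using homeomorphic_imp_injective_map[OF q_homeomorphic_units] S.units_subset
    by (simp add: Int_absorb1)
  moreover have "x \<in> UG" using assms q_unit by blast
  then have "i (x, 1) \<in> US" "q (i (x, 1)) = x"
    using units_S unit_subgroup by (auto simp: unit_subgroup_def)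
  ultimately show ?thesis using assms by (metis inj_onD)
qed

lemma S_r_eq: "e \<in> S.C \<Longrightarrow> S.r e = i (G.r (q e), 1)"
  and S_s_eq: "e \<in> S.C \<Longrightarrow> S.s e = i (G.s (q e), 1)"
  by (auto intro: unit_eq_i)

lemma S_composable_iff: "a \<in> S.C \<Longrightarrow> b \<in> S.C \<Longrightarrow> S.s a = S.r b \<longleftrightarrow> G.s (q a) = G.r (q b)"
  using q_mult(1) by (auto simp: S_r_eq S_s_eq)

lemma S_r_eq_iff: "a \<in> S.C \<Longrightarrow> b \<in> S.C \<Longrightarrow> S.r a = S.r b \<longleftrightarrow> G.r (q a) = G.r (q b)"
  by (metis S_r_eq q_r)

lemma act_eq: "act z e = S.m (i (G.r (q e), z)) e"
  by (simp add: tact_def)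

lemma composable_act: "e \<in> S.C \<Longrightarrow> z \<in> T \<Longrightarrow> S.s (i (G.r (q e), z)) = S.r e"
  using i_mult(1)[of "G.r (q e)" z 1] unit_subgroup by (simp add: S_r_eq unit_subgroup_def)

lemma act_in [simp]: "e \<in> S.C \<Longrightarrow> z \<in> T \<Longrightarrow> act z e \<in> S.C"
  unfolding act_eq using composable_act by simp

lemma q_act [simp]: "e \<in> S.C \<Longrightarrow> z \<in> T \<Longrightarrow> q (act z e) = q e"
  unfolding act_eq using q_mult(2)[of "i (G.r (q e), z)" e] composable_act by simp

lemma S_r_act [simp]: "e \<in> S.C \<Longrightarrow> z \<in> T \<Longrightarrow> S.r (act z e) = S.r e"
  and S_s_act [simp]: "e \<in> S.C \<Longrightarrow> z \<in> T \<Longrightarrow> S.s (act z e) = S.s e"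
  by (simp_all add: S_r_eq S_s_eq)

lemma act_one [simp]: "e \<in> S.C \<Longrightarrow> act 1 e = e"
  unfolding act_eq by (metis S.mult_r_left S_r_eq)

lemma act_act: assumes "e \<in> S.C" "z \<in> T" "w \<in> T" shows "act z (act w e) = act (z * w) e"
proof -
  let ?x = "G.r (q e)"
  have "act z (act w e) = S.m (i (G.r (q (act w e)), z)) (act w e)"
    by (rule act_eq)
  also have "\<dots> = S.m (i (?x, z)) (act w e)"
    using assms by simp
  also have "\<dots> = S.m (i (?x, z)) (S.m (i (?x, w)) e)"
    by (simp add: act_eq)
  also have "\<dots> = S.m (S.m (i (?x, z)) (i (?x, w))) e"
    using assms i_mult(1)[of ?x z w] composable_act[of e w] by (intro S.mult_assoc[symmetric]) auto
  also have "\<dots> = act (z * w) e"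
    using assms i_mult(2)[of ?x z w] by (simp add: act_eq)
  finally show ?thesis .
qed

lemma act_mult_left:
  assumes a: "a \<in> S.C" and b: "b \<in> S.C" and ab: "S.s a = S.r b" and z: "z \<in> T"
  shows "S.m (act z a) b = act z (S.m a b)"
proof -
  have "S.m (act z a) b = S.m (i (G.r (q a), z)) (S.m a b)"
    unfolding act_eq using assms composable_act[of a z] by (intro S.mult_assoc) auto
  also have "\<dots> = act z (S.m a b)"
    using assms q_mult[OF a b ab] by (simp add: act_eq)
  finally show ?thesis .
qed

lemma act_mult_right:
  assumes a: "a \<in> S.C" and b: "b \<in> S.C" and ab: "S.s a = S.r b" and z: "z \<in> T"
  shows "S.m a (act z b) = act z (S.m a b)"
proof -
  have gab: "G.s (q a) = G.r (q b)" using q_mult[OF a b ab] by simp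
  have c1: "S.s a = S.r (i (G.s (q a), z))" using a z by (simp add: S_s_eq S_r_eq)
  have "S.m a (act z b) = S.m a (S.m (i (G.s (q a), z)) b)" by (simp add: act_eq gab)
  also have "\<dots> = S.m (S.m a (i (G.s (q a), z))) b"
    using a b z composable_act[of b z] gab c1 by (intro S.mult_assoc[symmetric]) auto
  also have "\<dots> = S.m (act z a) b" using central[OF a z] by (simp add: act_eq)
  also have "\<dots> = act z (S.m a b)" by (rule act_mult_left[OF a b ab z])
  finally show ?thesis .
qed

lemma iv_act: assumes e: "e \<in> S.C" and z: "z \<in> T" shows "S.iv (act z e) = act (tinv z) (S.iv e)"
proof (rule S.iv_unique[symmetric])
  have "S.m (act z e) (act (tinv z) (S.iv e)) = act (tinv z) (S.m (act z e) (S.iv e))"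
    using e z by (intro act_mult_right) (auto simp: S_composable_iff)
  also have "\<dots> = act (tinv z) (act z (S.r e))"
    using act_mult_left[of e "S.iv e" z] e z by simp
  also have "\<dots> = S.r (act z e)"
    using e z act_act[of "S.r e" "tinv z" z] by (simp add: mult.commute)
  finally show "S.m (act z e) (act (tinv z) (S.iv e)) = S.r (act z e)" .
qed (use e z in \<open>auto simp: S_composable_iff\<close>)

lemma same_fibre_act:
  assumes e: "e \<in> S.C" and e': "e' \<in> S.C" and qe: "q e = q e'"
  obtains z where "z \<in> T" "e' = act z e"
proof -
  have c: "S.s e' = S.r (S.iv e)" using e e' qe by (simp add: S_s_eq)
  have "S.m e' (S.iv e) \<in> {x \<in> S.C. q x = G.r (q e)}"
    using q_mult[of e' "S.iv e"] c e e' qe by simp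
  then obtain z where z: "z \<in> T" and dz: "S.m e' (S.iv e) = i (G.r (q e), z)"
    using i_fibre[of "G.r (q e)"] e by auto
  have "act z e = S.m e' (S.m (S.iv e) e)"
    unfolding act_eq dz[symmetric] using e e' c by (intro S.mult_assoc) auto
  also have "\<dots> = e'" using e e' qe S_s_eq[of e] S_s_eq[of e'] by (metis S.mult_iv_left S.mult_s_right)
  finally show ?thesis using z that by simp
qed

lemma steinberg_continuous: "f \<in> A \<Longrightarrow> continuous_map (gtop S) (discrete_topology UNIV) f"
  and steinberg_equivariant: "f \<in> A \<Longrightarrow> e \<in> S.C \<Longrightarrow> z \<in> T \<Longrightarrow> f (act z e) = z * f e"
  and steinberg_vanishes: "f \<in> A \<Longrightarrow> e \<notin> S.C \<Longrightarrow> f e = 0"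
  unfolding twisted_steinberg_def by auto

definition qsupp :: "('s \<Rightarrow> 'r) \<Rightarrow> 'g set" where
  "qsupp f = gtop G closure_of (q ` {e \<in> S.C. f e \<noteq> 0})"

lemma compactin_qsupp: "f \<in> A \<Longrightarrow> compactin (gtop G) (qsupp f)"
  unfolding qsupp_def twisted_steinberg_def by auto

lemma qsupp_memI: "e \<in> S.C \<Longrightarrow> f e \<noteq> 0 \<Longrightarrow> q e \<in> qsupp f"
  unfolding qsupp_def by (rule closure_of_subset[THEN subsetD]) auto

lemma twisted_steinberg_iff:
  "f \<in> A \<longleftrightarrow> continuous_map (gtop S) (discrete_topology UNIV) f \<and>
     (\<forall>e\<in>S.C. \<forall>z\<in>T. f (act z e) = z * f e) \<and>
     (\<exists>K. compactin (gtop G) K \<and> (\<forall>e\<in>S.C. f e \<noteq> 0 \<longrightarrow> q e \<in> K)) \<and>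
     (\<forall>e. e \<notin> S.C \<longrightarrow> f e = 0)"
proof -
  have "compactin (gtop G) (gtop G closure_of (q ` {e \<in> S.C. f e \<noteq> 0})) \<longleftrightarrow>
      (\<exists>K. compactin (gtop G) K \<and> (\<forall>e\<in>S.C. f e \<noteq> 0 \<longrightarrow> q e \<in> K))"
  proof
    assume "compactin (gtop G) (gtop G closure_of (q ` {e \<in> S.C. f e \<noteq> 0}))"
    then show "\<exists>K. compactin (gtop G) K \<and> (\<forall>e\<in>S.C. f e \<noteq> 0 \<longrightarrow> q e \<in> K)"
      using qsupp_memI unfolding qsupp_def by blast
  next
    assume "\<exists>K. compactin (gtop G) K \<and> (\<forall>e\<in>S.C. f e \<noteq> 0 \<longrightarrow> q e \<in> K)"
    then obtain K where "compactin (gtop G) K" "q ` {e \<in> S.C. f e \<noteq> 0} \<subseteq> K" by blast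
    then show "compactin (gtop G) (gtop G closure_of (q ` {e \<in> S.C. f e \<noteq> 0}))"
      by (rule compactin_closure_of_subset[OF G.hausdorff])
  qed
  then show ?thesis unfolding twisted_steinberg_def by auto
qed

lemma summand_lift_invariant:
  assumes f: "f \<in> A" and g: "g \<in> A" and a: "a \<in> S.C" and b: "b \<in> S.C" and c: "c \<in> S.C"
    and ab: "q a = q b" and ac: "S.r a = S.r c"
  shows "f b * g (S.m (S.iv b) c) = f a * g (S.m (S.iv a) c)"
proof -
  obtain z where z: "z \<in> T" "b = act z a" using same_fibre_act[OF a b ab] by blast
  have c1: "S.s (S.iv a) = S.r c" using a ac by simp
  have "S.m (S.iv b) c = act (tinv z) (S.m (S.iv a) c)"
    using iv_act[OF a z(1)] act_mult_left[of "S.iv a" c "tinv z"] a c c1 z by simp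
  then have "f b * g (S.m (S.iv b) c) = (z * f a) * (tinv z * g (S.m (S.iv a) c))"
    using steinberg_equivariant[OF f a z(1)] steinberg_equivariant[OF g, of "S.m (S.iv a) c" "tinv z"]
      a c c1 z by simp
  also have "\<dots> = (z * tinv z) * (f a * g (S.m (S.iv a) c))"
    by (simp only: ac_simps)
  finally show ?thesis using z by simp
qed

section \<open>Convolution\<close>

lemma global_section_lift:
  assumes "continuous_global_section G S q P'" "a \<in> G.C"
  shows "P' a \<in> S.C" "q (P' a) = a"
  using assms continuous_map_image_subset_topspace[of "gtop G" "gtop S" P']
  unfolding continuous_global_section_def by auto

lemma P_in [simp]: "a \<in> G.C \<Longrightarrow> P a \<in> S.C"
  and q_P [simp]: "a \<in> G.C \<Longrightarrow> q (P a) = a"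
  using global_section_lift[OF global_section] by auto

lemma continuous_P: "continuous_map (gtop G) (gtop S) P"
  using global_section unfolding continuous_global_section_def by simp

lemma S_r_P: "a \<in> G.rfibre (G.r (q e)) \<Longrightarrow> e \<in> S.C \<Longrightarrow> S.r (P a) = S.r e"
  by (simp add: S_r_eq_iff G.rfibre_iff)

text \<open>The convolution with the sum indexed by G^r(q e) instead of G^s(q e); the substitution
  \<alpha> = q(e) \<gamma> identifies it with \<open>tconv\<close> (lemma \<open>tconv_eq_lconv\<close>).\<close>
definition lconv :: "('s \<Rightarrow> 'r) \<Rightarrow> ('s \<Rightarrow> 'r) \<Rightarrow> 's \<Rightarrow> 'r" where
  "lconv f g e = (if e \<in> S.C
     then fsum (\<lambda>a. f (P a) * g (S.m (S.iv (P a)) e)) (G.rfibre (G.r (q e))) else 0)"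

lemma finite_lift_support:
  assumes f: "f \<in> A" and x: "x \<in> G.C"
    and \<sigma>: "\<And>a. a \<in> G.rfibre x \<Longrightarrow> \<sigma> a \<in> S.C \<and> q (\<sigma> a) = a"
  shows "finite {a \<in> G.rfibre x. f (\<sigma> a) * h a \<noteq> 0}"
proof (rule finite_subset)
  show "{a \<in> G.rfibre x. f (\<sigma> a) * h a \<noteq> 0} \<subseteq> G.rfibre x \<inter> qsupp f"
  proof safe
    fix a assume "a \<in> G.rfibre x" "f (\<sigma> a) * h a \<noteq> 0"
    then show "a \<in> qsupp f" using qsupp_memI[of "\<sigma> a" f] \<sigma> by force
  qed
qed (rule G.finite_rfibre_Int_compactin[OF x compactin_qsupp[OF f]])

lemma finite_lconv_support:
  "f \<in> A \<Longrightarrow> e \<in> S.C \<Longrightarrow> finite {a \<in> G.rfibre (G.r (q e)). f (P a) * h a \<noteq> 0}"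
  by (rule finite_lift_support) (auto simp: G.rfibre_iff)

lemma lconv_any_lift:
  assumes f: "f \<in> A" and g: "g \<in> A" and e: "e \<in> S.C"
    and \<sigma>: "\<And>a. a \<in> G.rfibre (G.r (q e)) \<Longrightarrow> \<sigma> a \<in> S.C \<and> q (\<sigma> a) = a"
  shows "lconv f g e = fsum (\<lambda>a. f (\<sigma> a) * g (S.m (S.iv (\<sigma> a)) e)) (G.rfibre (G.r (q e)))"
  unfolding lconv_def using e
proof (simp, intro fsum_cong)
  fix a assume a: "a \<in> G.rfibre (G.r (q e))"
  then show "f (P a) * g (S.m (S.iv (P a)) e) = f (\<sigma> a) * g (S.m (S.iv (\<sigma> a)) e)"
    using summand_lift_invariant[OF f g, of "P a" "\<sigma> a" e] \<sigma>[OF a] e S_r_P[OF a e]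
    by (simp add: G.rfibre_iff)
qed

lemma tconv_eq_fsum:
  assumes "e \<in> S.C"
  shows "conv_support G S q P' f g e = {c \<in> G.rfibre (G.s (q e)). conv_summand S P' f g e c \<noteq> 0}"
    and "tconv G S q P' f g e = fsum (conv_summand S P' f g e) (G.rfibre (G.s (q e)))"
  using assms unfolding tconv_def fsum_def conv_support_def G.rfibre_def by auto

lemma translated_section_lift:
  assumes P': "continuous_global_section G S q P'" and e: "e \<in> S.C"
    and c: "c \<in> G.rfibre (G.r (q e))"
  shows "S.m e (P' (G.m (G.iv (q e)) c)) \<in> S.C" "q (S.m e (P' (G.m (G.iv (q e)) c))) = c"
proof -
  let ?b = "G.m (G.iv (q e)) c"
  have b: "?b \<in> G.C" "G.r ?b = G.s (q e)" using e c by (auto simp: G.rfibre_iff)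
  then have "S.s e = S.r (P' ?b)"
    using global_section_lift[OF P'] e by (simp add: S_composable_iff)
  then show "S.m e (P' ?b) \<in> S.C" "q (S.m e (P' ?b)) = c"
    using q_mult[of e "P' ?b"] global_section_lift[OF P' b(1)] e c
    by (simp_all add: G.mult_iv_cancel_left G.rfibre_iff)
qed

lemma tconv_eq_lconv:
  assumes f: "f \<in> A" and g: "g \<in> A" and P': "continuous_global_section G S q P'"
    and e: "e \<in> S.C"
  shows "tconv G S q P' f g e = lconv f g e" and "finite (conv_support G S q P' f g e)"
proof -
  let ?a = "q e"
  define \<sigma> where "\<sigma> c = S.m e (P' (G.m (G.iv ?a) c))" for c
  let ?h = "\<lambda>c. f (\<sigma> c) * g (S.m (S.iv (\<sigma> c)) e)"
  have a: "?a \<in> G.C" using e by simp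
  have translate: "?h (G.m ?a c) = conv_summand S P' f g e c" if "c \<in> G.rfibre (G.s ?a)" for c
  proof -
    have c: "c \<in> G.C" "G.r c = G.s ?a" using that by (auto simp: G.rfibre_iff)
    then have "S.s e = S.r (P' c)"
      using global_section_lift[OF P'] e by (simp add: S_composable_iff)
    then show ?thesis
      using c a e global_section_lift[OF P' c(1)]
      by (simp add: \<sigma>_def conv_summand_def G.iv_mult_cancel_left S.iv_mult_cancel_right)
  qed
  have \<sigma>: "\<sigma> c \<in> S.C \<and> q (\<sigma> c) = c" if "c \<in> G.rfibre (G.r (q e))" for c
    unfolding \<sigma>_def using translated_section_lift[OF P' e that] by simp
  have bij: "bij_betw (G.m ?a) (G.rfibre (G.s ?a)) (G.rfibre (G.r ?a))"
    by (rule G.bij_betw_mult_rfibre[OF a])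
  have "tconv G S q P' f g e = fsum ?h (G.rfibre (G.r ?a))"
    unfolding tconv_eq_fsum(2)[OF e] by (rule fsum_reindex_bij_betw[where h' = ?h, OF bij translate])
  also have "\<dots> = lconv f g e"
    by (rule lconv_any_lift[OF f g e \<sigma>, symmetric])
  finally show "tconv G S q P' f g e = lconv f g e" .
  have "bij_betw (G.m ?a) (conv_support G S q P' f g e) {c \<in> G.rfibre (G.r ?a). ?h c \<noteq> 0}"
    unfolding tconv_eq_fsum(1)[OF e] by (rule bij_betw_support[where h' = ?h, OF bij translate])
  moreover have "finite {c \<in> G.rfibre (G.r ?a). ?h c \<noteq> 0}"
    using finite_lift_support[OF f _ \<sigma>] a by simp
  ultimately show "finite (conv_support G S q P' f g e)"
    using bij_betw_finite by blast
qed

lemma tconv_eq_lconv_fun: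
  "f \<in> A \<Longrightarrow> g \<in> A \<Longrightarrow> continuous_global_section G S q P' \<Longrightarrow> tconv G S q P' f g = lconv f g"
  using tconv_eq_lconv(1) by (auto simp: tconv_def lconv_def)

lemma q_iv_mult:
  assumes "a \<in> S.C" "b \<in> S.C" "S.r a = S.r b"
  shows "S.m (S.iv a) b \<in> S.C" "q (S.m (S.iv a) b) = G.m (G.iv (q a)) (q b)"
    "G.r (q (S.m (S.iv a) b)) = G.s (q a)"
  using assms q_mult[of "S.iv a" b] by auto

lemma lconv_nonzeroD:
  assumes f: "f \<in> A" and g: "g \<in> A" and nz: "lconv f g e \<noteq> 0"
  shows "e \<in> S.C" "q e \<in> G.setmult (qsupp f) (qsupp g)"
proof -
  show e: "e \<in> S.C" using nz unfolding lconv_def by (auto split: if_splits)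
  then obtain a where a: "a \<in> G.rfibre (G.r (q e))"
    and nz': "f (P a) * g (S.m (S.iv (P a)) e) \<noteq> 0"
    using nz fsum_not_neutral_contains_not_neutral unfolding lconv_def by fastforce
  let ?b = "S.m (S.iv (P a)) e"
  have aC: "a \<in> G.C" and ra: "G.r a = G.r (q e)" using a by (auto simp: G.rfibre_iff)
  note b = q_iv_mult[of "P a" e, OF P_in[OF aC] e S_r_P[OF a e]]
  have "f (P a) \<noteq> 0" "g ?b \<noteq> 0" using nz' by auto
  then have "a \<in> qsupp f" "q ?b \<in> qsupp g"
    using qsupp_memI[of "P a" f] qsupp_memI[of ?b g] aC b by auto
  then have "G.m a (q ?b) \<in> G.setmult (qsupp f) (qsupp g)"
    using aC b q_in[OF b(1)] by (intro G.setmultI) auto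
  then show "q e \<in> G.setmult (qsupp f) (qsupp g)"
    using b aC e ra by (simp add: G.mult_iv_cancel_left)
qed

lemma lconv_act:
  assumes f: "f \<in> A" and g: "g \<in> A" and e: "e \<in> S.C" and z: "z \<in> T"
  shows "lconv f g (act z e) = z * lconv f g e"
proof -
  let ?x = "G.r (q e)"
  have "lconv f g (act z e) = fsum (\<lambda>a. f (P a) * g (S.m (S.iv (P a)) (act z e))) (G.rfibre ?x)"
    unfolding lconv_def using e z by simp
  also have "\<dots> = fsum (\<lambda>a. z * (f (P a) * g (S.m (S.iv (P a)) e))) (G.rfibre ?x)"
  proof (rule fsum_cong)
    fix a assume a: "a \<in> G.rfibre ?x"
    then have "S.s (S.iv (P a)) = S.r e" "P a \<in> S.C" using S_r_P[OF a e] by (auto simp: G.rfibre_iff)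
    then have "g (S.m (S.iv (P a)) (act z e)) = z * g (S.m (S.iv (P a)) e)"
      using e z act_mult_right[of "S.iv (P a)" e z] steinberg_equivariant[OF g] by simp
    then show "f (P a) * g (S.m (S.iv (P a)) (act z e)) = z * (f (P a) * g (S.m (S.iv (P a)) e))"
      by (simp add: algebra_simps)
  qed
  also have "\<dots> = z * lconv f g e"
    unfolding lconv_def using e by (simp add: fsum_distrib_left[OF finite_lconv_support[OF f e]])
  finally show ?thesis .
qed

lemma lconv_add_left:
  assumes f: "f \<in> A" and g: "g \<in> A"
  shows "lconv (\<lambda>e. f e + g e) h = (\<lambda>e. lconv f h e + lconv g h e)"
proof
  fix e show "lconv (\<lambda>e. f e + g e) h e = lconv f h e + lconv g h e"
    using fsum_add[OF finite_lconv_support[OF f] finite_lconv_support[OF g]]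
    by (cases "e \<in> S.C") (simp_all add: lconv_def distrib_right)
qed

lemma lconv_add_right:
  assumes f: "f \<in> A"
  shows "lconv f (\<lambda>e. g e + h e) = (\<lambda>e. lconv f g e + lconv f h e)"
proof
  fix e show "lconv f (\<lambda>e. g e + h e) e = lconv f g e + lconv f h e"
    using fsum_add[OF finite_lconv_support[OF f] finite_lconv_support[OF f]]
    by (cases "e \<in> S.C") (simp_all add: lconv_def distrib_left)
qed

lemma lconv_smult_left:
  assumes f: "f \<in> A"
  shows "lconv (\<lambda>e. c * f e) g = (\<lambda>e. c * lconv f g e)"
proof
  fix e show "lconv (\<lambda>e. c * f e) g e = c * lconv f g e"
    using fsum_distrib_left[OF finite_lconv_support[OF f]]
    by (cases "e \<in> S.C") (simp_all add: lconv_def mult.assoc)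
qed

lemma lconv_smult_right:
  assumes f: "f \<in> A"
  shows "lconv f (\<lambda>e. c * g e) = (\<lambda>e. c * lconv f g e)"
proof
  fix e show "lconv f (\<lambda>e. c * g e) e = c * lconv f g e"
    using fsum_distrib_left[OF finite_lconv_support[OF f]]
    by (cases "e \<in> S.C") (simp_all add: lconv_def mult.left_commute[of _ c])
qed

lemma steinberg_zero: "(\<lambda>_. 0) \<in> A"
  unfolding twisted_steinberg_def by simp

lemma steinberg_add:
  assumes f: "f \<in> A" and g: "g \<in> A"
  shows "(\<lambda>e. f e + g e) \<in> A"
  unfolding twisted_steinberg_iff
proof (intro conjI ballI allI impI exI)
  show "continuous_map (gtop S) (discrete_topology UNIV) (\<lambda>e. f e + g e)"
    by (rule continuous_map_discrete_combine[OF steinberg_continuous[OF f] steinberg_continuous[OF g]])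
  show "compactin (gtop G) (qsupp f \<union> qsupp g)"
    using compactin_qsupp[OF f] compactin_qsupp[OF g] by (rule compactin_Un)
  fix e
  show "e \<in> S.C \<Longrightarrow> f e + g e \<noteq> 0 \<Longrightarrow> q e \<in> qsupp f \<union> qsupp g"
    using qsupp_memI[of e f] qsupp_memI[of e g] by (cases "f e = 0") auto
  show "e \<notin> S.C \<Longrightarrow> f e + g e = 0"
    using steinberg_vanishes[OF f] steinberg_vanishes[OF g] by simp
  fix z show "e \<in> S.C \<Longrightarrow> z \<in> T \<Longrightarrow> f (act z e) + g (act z e) = z * (f e + g e)"
    using steinberg_equivariant[OF f] steinberg_equivariant[OF g] by (simp add: distrib_left)
qed

lemma steinberg_smult:
  assumes f: "f \<in> A"
  shows "(\<lambda>e. c * f e) \<in> A"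
  unfolding twisted_steinberg_iff
proof (intro conjI ballI allI impI exI)
  show "continuous_map (gtop S) (discrete_topology UNIV) (\<lambda>e. c * f e)"
    by (rule continuous_map_discrete_combine[OF steinberg_continuous[OF f] steinberg_continuous[OF f]])
  show "compactin (gtop G) (qsupp f)" by (rule compactin_qsupp[OF f])
  fix e
  show "e \<in> S.C \<Longrightarrow> c * f e \<noteq> 0 \<Longrightarrow> q e \<in> qsupp f"
    using qsupp_memI[of e f] by (cases "f e = 0") auto
  show "e \<notin> S.C \<Longrightarrow> c * f e = 0"
    using steinberg_vanishes[OF f] by simp
  fix z show "e \<in> S.C \<Longrightarrow> z \<in> T \<Longrightarrow> c * f (act z e) = z * (c * f e)"
    using steinberg_equivariant[OF f] by (simp add: mult.left_commute)
qed

lemma lconv_in_steinberg_if_continuous: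
  assumes f: "f \<in> A" and g: "g \<in> A"
    and cont: "continuous_map (gtop S) (discrete_topology UNIV) (lconv f g)"
  shows "lconv f g \<in> A"
  unfolding twisted_steinberg_iff
proof (intro conjI ballI allI impI exI cont)
  show "compactin (gtop G) (G.setmult (qsupp f) (qsupp g))"
    by (rule G.compactin_setmult[OF compactin_qsupp[OF f] compactin_qsupp[OF g]])
  show "q e \<in> G.setmult (qsupp f) (qsupp g)" if "lconv f g e \<noteq> 0" for e
    using lconv_nonzeroD[OF f g that] by blast
  show "lconv f g e = 0" if "e \<notin> S.C" for e
    using that by (simp add: lconv_def)
  show "lconv f g (act z e) = z * lconv f g e" if "e \<in> S.C" "z \<in> T" for e z
    by (rule lconv_act[OF f g that])
qed

lemma lconv_eq_sum:
  assumes e: "e \<in> S.C" and F: "finite F" "F \<subseteq> G.rfibre (G.r (q e))"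
    and vanish: "\<And>a. a \<in> G.rfibre (G.r (q e)) \<Longrightarrow> a \<notin> F \<Longrightarrow> f (P a) = 0"
  shows "lconv f g e = (\<Sum>a\<in>F. f (P a) * g (S.m (S.iv (P a)) e))"
  unfolding lconv_def using e by (simp add: fsum_eq_sum[OF F] vanish)

lemma lconv_translate:
  assumes g: "g \<in> A" and h: "h \<in> A" and e: "e \<in> S.C" and b: "b \<in> G.rfibre (G.r (q e))"
  shows "lconv g h (S.m (S.iv (P b)) e) =
    fsum (\<lambda>a. g (S.m (S.iv (P b)) (P a)) * h (S.m (S.iv (P a)) e)) (G.rfibre (G.r (q e)))"
proof -
  let ?c = "S.m (S.iv (P b)) e"
  have bC: "b \<in> G.C" and rb: "G.r b = G.r (q e)" using b by (auto simp: G.rfibre_iff)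
  note c = q_iv_mult[OF P_in[OF bC] e S_r_P[OF b e]]
  define \<sigma> where "\<sigma> d = S.m (S.iv (P b)) (P (G.m b d))" for d
  have \<sigma>: "\<sigma> d \<in> S.C \<and> q (\<sigma> d) = d" if "d \<in> G.rfibre (G.r (q ?c))" for d
  proof -
    have d: "d \<in> G.C" "G.r d = G.s b" using that c bC by (auto simp: G.rfibre_iff)
    then have "G.m b d \<in> G.rfibre (G.r (q e))" using bC rb by (simp add: G.rfibre_iff)
    then show ?thesis
      unfolding \<sigma>_def using q_iv_mult[of "P b" "P (G.m b d)"] bC d S_r_P[OF b e] S_r_P[of "G.m b d" e] e
      by (simp add: G.iv_mult_cancel_left)
  qed
  have bij: "bij_betw (G.m b) (G.rfibre (G.r (q ?c))) (G.rfibre (G.r (q e)))"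
    using G.bij_betw_mult_rfibre[OF bC] c bC rb by simp
  have "lconv g h ?c = fsum (\<lambda>d. g (\<sigma> d) * h (S.m (S.iv (\<sigma> d)) ?c)) (G.rfibre (G.r (q ?c)))"
    by (rule lconv_any_lift[OF g h c(1) \<sigma>])
  also have "\<dots> = fsum (\<lambda>a. g (S.m (S.iv (P b)) (P a)) *
      h (S.m (S.iv (S.m (S.iv (P b)) (P a))) ?c)) (G.rfibre (G.r (q e)))"
    by (rule fsum_reindex_bij_betw[OF bij]) (simp add: \<sigma>_def)
  also have "\<dots> = fsum (\<lambda>a. g (S.m (S.iv (P b)) (P a)) * h (S.m (S.iv (P a)) e)) (G.rfibre (G.r (q e)))"
  proof (rule fsum_cong)
    fix a assume a: "a \<in> G.rfibre (G.r (q e))"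
    then have "S.m (S.iv (S.m (S.iv (P b)) (P a))) ?c = S.m (S.iv (P a)) e"
      using bC e S_r_P[OF b e] S_r_P[OF a e] by (intro S.iv_left_quotient) (auto simp: G.rfibre_iff)
    then show "g (S.m (S.iv (P b)) (P a)) * h (S.m (S.iv (S.m (S.iv (P b)) (P a))) ?c) =
        g (S.m (S.iv (P b)) (P a)) * h (S.m (S.iv (P a)) e)" by simp
  qed
  finally show ?thesis .
qed

lemma lconv_translate_eq_sum:
  assumes f: "f \<in> A" and g: "g \<in> A" and h: "h \<in> A" and e: "e \<in> S.C"
    and b: "b \<in> G.rfibre (G.r (q e)) \<inter> qsupp f"
  shows "lconv g h (S.m (S.iv (P b)) e) =
    (\<Sum>a \<in> G.rfibre (G.r (q e)) \<inter> G.setmult (qsupp f) (qsupp g).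
      g (S.m (S.iv (P b)) (P a)) * h (S.m (S.iv (P a)) e))"
proof -
  let ?x = "G.r (q e)"
  have bC: "b \<in> G.C" "G.r b = ?x" using b by (auto simp: G.rfibre_iff)
  have "g (S.m (S.iv (P b)) (P a)) = 0"
    if a: "a \<in> G.rfibre ?x" "a \<notin> G.setmult (qsupp f) (qsupp g)" for a
  proof (rule ccontr)
    let ?d = "S.m (S.iv (P b)) (P a)"
    have aC: "a \<in> G.C" "G.r a = ?x" using a by (auto simp: G.rfibre_iff)
    have "S.r (P b) = S.r (P a)" using aC bC by (simp add: S_r_eq_iff)
    note d = q_iv_mult[OF P_in[OF bC(1)] P_in[OF aC(1)] this]
    assume "g ?d \<noteq> 0"
    then have "q ?d \<in> qsupp g" using qsupp_memI d(1) by blast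
    then have "G.m b (q ?d) \<in> G.setmult (qsupp f) (qsupp g)"
      using b d aC bC q_in[OF d(1)] by (intro G.setmultI) auto
    then show False
      using a d aC bC by (simp add: G.mult_iv_cancel_left)
  qed
  moreover have "finite (G.rfibre ?x \<inter> G.setmult (qsupp f) (qsupp g))"
    using e G.finite_rfibre_Int_compactin G.compactin_setmult compactin_qsupp f g by simp
  ultimately show ?thesis
    unfolding lconv_translate[OF g h e b[THEN IntD1]] by (intro fsum_eq_sum) auto
qed

text \<open>Both sides are the double sum of f(P b) g(P(b)^-1 P(a)) h(P(a)^-1 e) over a in the finite
  set G^r(q e) \<inter> supp f \<cdot> supp g and b in G^r(q e) \<inter> supp f.\<close>
lemma lconv_assoc_at:
  assumes f: "f \<in> A" and g: "g \<in> A" and h: "h \<in> A" and e: "e \<in> S.C"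
  shows "lconv (lconv f g) h e = lconv f (lconv g h) e"
proof -
  define x where "x = G.r (q e)"
  define M where "M = G.setmult (qsupp f) (qsupp g)"
  define Fa where "Fa = G.rfibre x \<inter> M"
  define Fb where "Fb = G.rfibre x \<inter> qsupp f"
  define t where "t a b = f (P b) * g (S.m (S.iv (P b)) (P a)) * h (S.m (S.iv (P a)) e)" for a b
  have xC: "x \<in> G.C" using e by (simp add: x_def)
  have Fa: "finite Fa" "Fa \<subseteq> G.rfibre x"
    unfolding Fa_def M_def using G.finite_rfibre_Int_compactin[OF xC
      G.compactin_setmult[OF compactin_qsupp[OF f] compactin_qsupp[OF g]]] by auto
  have Fb: "finite Fb" "Fb \<subseteq> G.rfibre x"
    unfolding Fb_def using G.finite_rfibre_Int_compactin[OF xC compactin_qsupp[OF f]] by auto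
  have f_vanish: "f (P b) = 0" if "b \<in> G.rfibre x" "b \<notin> Fb" for b
    using that qsupp_memI[of "P b" f] by (auto simp: Fb_def G.rfibre_iff)
  have inner_left: "lconv f g (P a) = (\<Sum>b\<in>Fb. f (P b) * g (S.m (S.iv (P b)) (P a)))"
    if a: "a \<in> G.rfibre x" for a
    using a Fb f_vanish by (intro lconv_eq_sum) (auto simp: G.rfibre_iff)
  have inner_right: "lconv g h (S.m (S.iv (P b)) e) =
      (\<Sum>a\<in>Fa. g (S.m (S.iv (P b)) (P a)) * h (S.m (S.iv (P a)) e))"
    if "b \<in> Fb" for b
    using that lconv_translate_eq_sum[OF f g h e] by (simp add: Fa_def Fb_def M_def x_def)
  have "lconv (lconv f g) h e = (\<Sum>a\<in>Fa. lconv f g (P a) * h (S.m (S.iv (P a)) e))"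
  proof (rule lconv_eq_sum[OF e])
    show "lconv f g (P a) = 0" if "a \<in> G.rfibre (G.r (q e))" "a \<notin> Fa" for a
      using that lconv_nonzeroD(2)[OF f g, of "P a"] by (auto simp: Fa_def M_def x_def G.rfibre_iff)
  qed (use Fa in \<open>simp_all add: x_def\<close>)
  also have "\<dots> = (\<Sum>a\<in>Fa. \<Sum>b\<in>Fb. t a b)"
    using Fa(2) by (simp add: inner_left t_def sum_distrib_right subset_iff)
  also have "\<dots> = (\<Sum>b\<in>Fb. \<Sum>a\<in>Fa. t a b)"
    by (rule sum.swap)
  also have "\<dots> = (\<Sum>b\<in>Fb. f (P b) * lconv g h (S.m (S.iv (P b)) e))"
    by (simp add: inner_right t_def sum_distrib_left mult.assoc)
  also have "\<dots> = lconv f (lconv g h) e"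
    using Fb f_vanish by (intro lconv_eq_sum[symmetric] e) (auto simp: x_def)
  finally show ?thesis .
qed

lemma lconv_assoc:
  assumes "f \<in> A" "g \<in> A" "h \<in> A"
  shows "lconv (lconv f g) h = lconv f (lconv g h)"
proof
  fix e show "lconv (lconv f g) h e = lconv f (lconv g h) e"
  proof (cases "e \<in> S.C")
    case True then show ?thesis by (rule lconv_assoc_at[OF assms])
  qed (simp add: lconv_def)
qed

text \<open>If r(q e) lies in r(B) for the chosen bisection B through a, then B contains exactly one
  element \<open>lift a e\<close> of G^r(q e), and it depends continuously on e.\<close>
definition lift_dom :: "'g \<Rightarrow> 's set" where
  "lift_dom a = {e \<in> S.C. G.r (q e) \<in> G.r ` G.nbhd_bisection a}"

definition lift :: "'g \<Rightarrow> 's \<Rightarrow> 'g" where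
  "lift a e = G.local_r_section a (G.r (q e))"

lemma continuous_r_q: "continuous_map (gtop S) (subtopology (gtop G) UG) (G.r \<circ> q)"
  by (intro continuous_map_into_subtopology continuous_map_compose[OF continuous_q G.continuous_r])
     auto

lemma openin_lift_dom: "a \<in> G.C \<Longrightarrow> openin (gtop S) (lift_dom a)"
  using openin_continuous_map_preimage[OF continuous_r_q G.openin_r_nbhd_bisection]
  by (simp add: lift_dom_def)

lemma lift_in:
  assumes "a \<in> G.C" "e \<in> lift_dom a"
  shows "lift a e \<in> G.nbhd_bisection a" "lift a e \<in> G.rfibre (G.r (q e))"
  using G.local_r_section_in[OF assms(1)] G.nbhd_bisection(4)[OF assms(1)] assms(2)
  by (auto simp: lift_def lift_dom_def G.rfibre_iff)

lemma lift_self: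
  assumes "a \<in> G.C" "e \<in> S.C" "G.r (q e) = G.r a"
  shows "e \<in> lift_dom a" "lift a e = a"
  using assms G.nbhd_bisection(3)[OF assms(1)] G.local_r_section_r[OF assms(1)]
  by (auto simp: lift_dom_def lift_def)

lemma continuous_lift:
  assumes "a \<in> G.C"
  shows "continuous_map (subtopology (gtop S) (lift_dom a)) (gtop G) (lift a)"
proof -
  have "continuous_map (subtopology (gtop S) (lift_dom a)) (subtopology (gtop G) (G.r ` G.nbhd_bisection a))
      (G.r \<circ> q)"
    by (intro continuous_map_into_subtopology continuous_map_from_subtopology
        continuous_map_compose[OF continuous_q G.continuous_r]) (auto simp: lift_dom_def)
  then have "continuous_map (subtopology (gtop S) (lift_dom a)) (gtop G)
      (G.local_r_section a \<circ> (G.r \<circ> q))"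
    using continuous_map_compose G.continuous_local_r_section[OF assms] continuous_map_into_fulltopology
    by blast
  moreover have "G.local_r_section a \<circ> (G.r \<circ> q) = lift a" by (auto simp: lift_def)
  ultimately show ?thesis by simp
qed

lemma continuous_quotient_lift:
  assumes a: "a \<in> G.C"
  shows "continuous_map (subtopology (gtop S) (lift_dom a)) (gtop S) (\<lambda>e. S.m (S.iv (P (lift a e))) e)"
proof -
  let ?X = "subtopology (gtop S) (lift_dom a)"
  have "continuous_map ?X (gtop S) (\<lambda>e. S.iv (P (lift a e)))"
    using continuous_map_compose[OF continuous_map_compose[OF continuous_lift[OF a] continuous_P]
        S.continuous_iv] by (simp add: comp_def)
  moreover have "continuous_map ?X (gtop S) (\<lambda>e. e)"
    by (simp add: continuous_map_from_subtopology)
  ultimately have "continuous_map ?X (subtopology (prod_topology (gtop S) (gtop S)) (composable S))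
      (\<lambda>e. (S.iv (P (lift a e)), e))"
    using lift_in[OF a] by (intro continuous_map_into_subtopology continuous_map_pairedI)
      (auto simp: composable_def lift_dom_def S_r_P G.rfibre_iff)
  from continuous_map_compose[OF this S.continuous_mult] show ?thesis
    by (simp add: comp_def)
qed

lemma openin_lift_level_sets:
  assumes a: "a \<in> G.C" and f: "f \<in> A"
  shows "openin (gtop S) {e \<in> lift_dom a. f (P (lift a e)) = c}"
    and "openin (gtop S) {e \<in> lift_dom a. f (S.m (S.iv (P (lift a e))) e) = c}"
proof -
  have "continuous_map (subtopology (gtop S) (lift_dom a)) (discrete_topology UNIV) (\<lambda>e. f (P (lift a e)))"
    using continuous_map_compose[OF continuous_map_compose[OF continuous_lift[OF a] continuous_P]
        steinberg_continuous[OF f]] by (simp add: comp_def)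
  moreover have "continuous_map (subtopology (gtop S) (lift_dom a)) (discrete_topology UNIV)
      (\<lambda>e. f (S.m (S.iv (P (lift a e))) e))"
    using continuous_map_compose[OF continuous_quotient_lift[OF a] steinberg_continuous[OF f]]
    by (simp add: comp_def)
  ultimately show "openin (gtop S) {e \<in> lift_dom a. f (P (lift a e)) = c}"
    and "openin (gtop S) {e \<in> lift_dom a. f (S.m (S.iv (P (lift a e))) e) = c}"
    by (simp_all add: openin_level_set openin_lift_dom[OF a])
qed

lemma openin_lift_neq:
  assumes a: "a \<in> G.C" and b: "b \<in> G.C"
  shows "openin (gtop S) {e \<in> lift_dom a \<inter> lift_dom b. lift a e \<noteq> lift b e}"
proof -
  let ?W = "lift_dom a \<inter> lift_dom b"
  let ?X = "subtopology (gtop S) ?W"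
  have W: "openin (gtop S) ?W" using openin_lift_dom[OF a] openin_lift_dom[OF b] by blast
  have "closedin ?X {e \<in> topspace ?X. lift a e = lift b e}"
    by (intro closedin_continuous_maps_eq[OF G.hausdorff]
        continuous_map_from_subtopology_mono[OF continuous_lift[OF a]]
        continuous_map_from_subtopology_mono[OF continuous_lift[OF b]]) auto
  then have "openin ?X (topspace ?X - {e \<in> topspace ?X. lift a e = lift b e})"
    by (simp add: closedin_def)
  moreover have "topspace ?X - {e \<in> topspace ?X. lift a e = lift b e} =
      {e \<in> ?W. lift a e \<noteq> lift b e}"
    using openin_subset[OF W] by auto
  ultimately show ?thesis using openin_trans_full W by metis
qed

lemma lconv_eq_sum_lifts:
  assumes e: "e \<in> S.C" and F: "finite F" "F \<subseteq> G.C" "\<And>a. a \<in> F \<Longrightarrow> e \<in> lift_dom a"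
    and inj: "inj_on (\<lambda>a. lift a e) F"
    and covered: "\<And>c. c \<in> G.rfibre (G.r (q e)) \<Longrightarrow> c \<in> qsupp f \<Longrightarrow>
      \<exists>a\<in>F. c \<in> G.nbhd_bisection a"
  shows "lconv f g e = (\<Sum>a\<in>F. f (P (lift a e)) * g (S.m (S.iv (P (lift a e))) e))"
proof -
  have "lconv f g e = (\<Sum>c\<in>(\<lambda>a. lift a e) ` F. f (P c) * g (S.m (S.iv (P c)) e))"
  proof (rule lconv_eq_sum[OF e])
    show "(\<lambda>a. lift a e) ` F \<subseteq> G.rfibre (G.r (q e))" using F lift_in by blast
    show "f (P c) = 0" if c: "c \<in> G.rfibre (G.r (q e))" "c \<notin> (\<lambda>a. lift a e) ` F" for c
    proof (rule ccontr)
      assume "f (P c) \<noteq> 0"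
      then have "c \<in> qsupp f" using qsupp_memI[of "P c" f] c by (simp add: G.rfibre_iff)
      then obtain a where "a \<in> F" "c \<in> G.nbhd_bisection a" using covered c by blast
      then have "c = lift a e"
        using G.local_r_section_r[of a c] F c by (auto simp: lift_def G.rfibre_iff)
      then show False using c \<open>a \<in> F\<close> by blast
    qed
  qed (use F in simp)
  also have "\<dots> = (\<Sum>a\<in>F. f (P (lift a e)) * g (S.m (S.iv (P (lift a e))) e))"
    by (rule sum.reindex[OF inj, unfolded comp_def])
  finally show ?thesis .
qed

lemma lift_nbhd:
  assumes f: "f \<in> A" and g: "g \<in> A" and e0: "e0 \<in> S.C"
    and F: "finite F" "F \<subseteq> G.rfibre (G.r (q e0))"
    and U: "openin (gtop G) U" "G.r (q e0) \<in> U"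
  obtains N where "openin (gtop S) N" "e0 \<in> N"
    "\<And>e. e \<in> N \<Longrightarrow> e \<in> S.C \<and> G.r (q e) \<in> U \<and> (\<forall>a\<in>F. e \<in> lift_dom a) \<and> inj_on (\<lambda>a. lift a e) F"
    "\<And>e a. e \<in> N \<Longrightarrow> a \<in> F \<Longrightarrow>
      f (P (lift a e)) = f (P a) \<and> g (S.m (S.iv (P (lift a e))) e) = g (S.m (S.iv (P a)) e0)"
proof
  have FC: "a \<in> G.C" "G.r (q e0) = G.r a" if "a \<in> F" for a
    using F(2) that by (auto simp: G.rfibre_iff)
  define Nconst where "Nconst a = {e \<in> lift_dom a. f (P (lift a e)) = f (P a)} \<inter>
      {e \<in> lift_dom a. g (S.m (S.iv (P (lift a e))) e) = g (S.m (S.iv (P a)) e0)}" for a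
  define Ninj where "Ninj p = {e \<in> lift_dom (fst p) \<inter> lift_dom (snd p). lift (fst p) e \<noteq> lift (snd p) e}"
    for p
  define N where "N = {e \<in> S.C. G.r (q e) \<in> U} \<inter> \<Inter>(Nconst ` F) \<inter>
      \<Inter>(Ninj ` {p \<in> F \<times> F. fst p \<noteq> snd p})"
  have "openin (gtop S) {e \<in> S.C. G.r (q e) \<in> U}"
    using openin_continuous_map_preimage[OF continuous_map_compose[OF continuous_q G.continuous_r] U(1)]
    by simp
  moreover have "openin (gtop S) (Nconst a)" if "a \<in> F" for a
    using FC[OF that] unfolding Nconst_def by (intro openin_Int openin_lift_level_sets f g)
  moreover have "openin (gtop S) (Ninj p)" if "p \<in> F \<times> F" for p
    using FC that unfolding Ninj_def by (intro openin_lift_neq) auto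
  ultimately show "openin (gtop S) N"
    unfolding N_def using F(1) by (intro openin_Int openin_Int_Inter) auto
  have "e0 \<in> lift_dom a \<and> lift a e0 = a" if "a \<in> F" for a
    using FC[OF that] lift_self[OF _ e0] by auto
  then show "e0 \<in> N" using U(2) e0 by (auto simp: N_def Nconst_def Ninj_def)
  show "e \<in> S.C \<and> G.r (q e) \<in> U \<and> (\<forall>a\<in>F. e \<in> lift_dom a) \<and> inj_on (\<lambda>a. lift a e) F"
    if "e \<in> N" for e
    using that by (auto simp: N_def Nconst_def Ninj_def inj_on_def)
  show "f (P (lift a e)) = f (P a) \<and> g (S.m (S.iv (P (lift a e))) e) = g (S.m (S.iv (P a)) e0)"
    if "e \<in> N" "a \<in> F" for e a
    using that by (auto simp: N_def Nconst_def)
qed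

text \<open>Near e0 every index contributing to \<open>lconv f g e\<close> is \<open>lift a e\<close> for one of the finitely
  many a \<in> G^r(q e0) \<inter> supp f, and each of these terms is locally constant in e.\<close>
lemma lconv_locally_constant:
  assumes f: "f \<in> A" and g: "g \<in> A" and e0: "e0 \<in> S.C"
  shows "\<exists>N. openin (gtop S) N \<and> e0 \<in> N \<and> (\<forall>e\<in>N. lconv f g e = lconv f g e0)"
proof -
  define x0 where "x0 = G.r (q e0)"
  define F where "F = G.rfibre x0 \<inter> qsupp f"
  have x0: "x0 \<in> G.C" using e0 by (simp add: x0_def)
  have F: "finite F" "F \<subseteq> G.rfibre x0" "F \<subseteq> G.C"
    unfolding F_def using G.finite_rfibre_Int_compactin[OF x0 compactin_qsupp[OF f]]
    by (auto simp: G.rfibre_iff)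
  obtain U where U: "openin (gtop G) U" "x0 \<in> U"
    and covered: "\<And>c. c \<in> qsupp f \<Longrightarrow> G.r c \<in> U \<Longrightarrow> \<exists>a\<in>F. c \<in> G.nbhd_bisection a"
    using G.rfibre_compact_nbhd_covered[OF compactin_qsupp[OF f] x0, of G.nbhd_bisection]
      G.nbhd_bisection by (auto simp: F_def G.rfibre_iff)
  obtain N where N: "openin (gtop S) N" "e0 \<in> N"
    and lifts: "\<And>e. e \<in> N \<Longrightarrow>
      e \<in> S.C \<and> G.r (q e) \<in> U \<and> (\<forall>a\<in>F. e \<in> lift_dom a) \<and> inj_on (\<lambda>a. lift a e) F"
    and const: "\<And>e a. e \<in> N \<Longrightarrow> a \<in> F \<Longrightarrow>
      f (P (lift a e)) = f (P a) \<and> g (S.m (S.iv (P (lift a e))) e) = g (S.m (S.iv (P a)) e0)"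
    using lift_nbhd[OF f g e0 F(1) F(2)[unfolded x0_def] U[unfolded x0_def]] by blast
  have "lconv f g e = (\<Sum>a\<in>F. f (P a) * g (S.m (S.iv (P a)) e0))" if e: "e \<in> N" for e
  proof -
    have "lconv f g e = (\<Sum>a\<in>F. f (P (lift a e)) * g (S.m (S.iv (P (lift a e))) e))"
      using lifts[OF e] covered F by (intro lconv_eq_sum_lifts) (auto simp: G.rfibre_iff)
    also have "\<dots> = (\<Sum>a\<in>F. f (P a) * g (S.m (S.iv (P a)) e0))"
      using const[OF e] by (intro sum.cong) auto
    finally show ?thesis .
  qed
  then show ?thesis using N by metis
qed

lemma continuous_lconv:
  "f \<in> A \<Longrightarrow> g \<in> A \<Longrightarrow> continuous_map (gtop S) (discrete_topology UNIV) (lconv f g)"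
  by (rule continuous_map_discrete_if_locally_constant) (use lconv_locally_constant in auto)

lemma lconv_in_steinberg: "f \<in> A \<Longrightarrow> g \<in> A \<Longrightarrow> lconv f g \<in> A"
  by (rule lconv_in_steinberg_if_continuous[OF _ _ continuous_lconv])

lemma R_algebra_on_lconv: "R_algebra_on A lconv"
  unfolding R_algebra_on_def
  by (simp add: steinberg_zero steinberg_add steinberg_smult lconv_in_steinberg lconv_assoc
      lconv_add_left lconv_add_right lconv_smult_left lconv_smult_right)

end

section \<open>The involution\<close>

lemma ring_involution_0: "ring_involution bar \<Longrightarrow> bar 0 = 0"
  unfolding ring_involution_def by (metis add_cancel_right_right)

lemma ring_involution_eq_0_iff: "ring_involution bar \<Longrightarrow> bar a = 0 \<longleftrightarrow> a = 0"
  using ring_involution_0 unfolding ring_involution_def by metis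

context twist_with_section
begin

context
  fixes bar :: "'r \<Rightarrow> 'r"
  assumes bar: "T_inverse_involution T bar"
begin

lemma bar_add: "bar (a + b) = bar a + bar b"
  and bar_mult: "bar (a * b) = bar b * bar a"
  and bar_bar: "bar (bar a) = a"
  and bar_0: "bar 0 = 0"
  and bar_eq_0_iff: "bar a = 0 \<longleftrightarrow> a = 0"
  using bar ring_involution_0 ring_involution_eq_0_iff
  unfolding T_inverse_involution_def ring_involution_def by auto

lemma bar_tinv: assumes z: "z \<in> T" shows "bar (tinv z) = z"
proof -
  have "tinv z * bar (tinv z) = 1" using bar z unfolding T_inverse_involution_def by simp
  then have "(z * tinv z) * bar (tinv z) = z" by (simp add: mult.assoc)
  then show ?thesis using z by simp
qed

abbreviation "star \<equiv> tstar S bar"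

lemma star_in_steinberg:
  assumes f: "f \<in> A"
  shows "star f \<in> A"
  unfolding twisted_steinberg_iff
proof (intro conjI ballI allI impI exI)
  have "continuous_map (gtop S) (discrete_topology UNIV) (\<lambda>e. bar (f (S.iv e)))"
    using continuous_map_discrete_combine[OF continuous_map_compose[OF S.continuous_iv
        steinberg_continuous[OF f]] continuous_map_compose[OF S.continuous_iv steinberg_continuous[OF f]]]
    by (simp add: comp_def)
  then show "continuous_map (gtop S) (discrete_topology UNIV) (star f)"
    by (rule continuous_map_eq) (simp add: tstar_def)
  show "compactin (gtop G) (G.iv ` qsupp f)"
    by (rule image_compactin[OF compactin_qsupp[OF f] G.continuous_iv])
  fix e
  show "q e \<in> G.iv ` qsupp f" if "e \<in> S.C" "star f e \<noteq> 0"
  proof -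
    have "G.iv (q e) \<in> qsupp f"
      using that qsupp_memI[of "S.iv e" f] by (simp add: tstar_def bar_eq_0_iff)
    then show ?thesis using that by (auto intro: rev_image_eqI[of "G.iv (q e)"])
  qed
  show "star f e = 0" if "e \<notin> S.C" using that by (simp add: tstar_def)
  fix z assume e: "e \<in> S.C" and z: "z \<in> T"
  then have "star f (act z e) = bar (tinv z * f (S.iv e))"
    using iv_act[OF e z] steinberg_equivariant[OF f, of "S.iv e" "tinv z"] by (simp add: tstar_def)
  also have "\<dots> = z * star f e" using e z by (simp add: tstar_def bar_mult bar_tinv mult.commute)
  finally show "star f (act z e) = z * star f e" .
qed

lemma star_star: "f \<in> A \<Longrightarrow> star (star f) = f"
  by (rule ext) (auto simp: tstar_def bar_bar steinberg_vanishes)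

lemma star_add: "star (\<lambda>e. f e + g e) = (\<lambda>e. star f e + star g e)"
  by (rule ext) (simp add: tstar_def bar_add)

lemma star_smult: "star (\<lambda>e. c * f e) = (\<lambda>e. bar c * star f e)"
  by (rule ext) (simp add: tstar_def bar_mult mult.commute)

lemma star_lconv:
  assumes f: "f \<in> A" and g: "g \<in> A"
  shows "star (lconv f g) = lconv (star g) (star f)"
proof
  fix e show "star (lconv f g) e = lconv (star g) (star f) e"
  proof (cases "e \<in> S.C")
    case False then show ?thesis by (simp add: tstar_def lconv_def)
  next
    case e: True
    let ?y = "G.s (q e)"
    have "star (lconv f g) e = bar (fsum (\<lambda>a. f (P a) * g (S.m (S.iv (P a)) (S.iv e))) (G.rfibre ?y))"
      using e by (simp add: tstar_def lconv_def)
    also have "\<dots> = fsum (\<lambda>a. bar (f (P a) * g (S.m (S.iv (P a)) (S.iv e)))) (G.rfibre ?y)"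
      by (rule fsum_comp_morphism) (simp_all add: bar_0 bar_add bar_eq_0_iff)
    also have "\<dots> = fsum (conv_summand S P (star g) (star f) e) (G.rfibre ?y)"
    proof (rule fsum_cong)
      fix c assume "c \<in> G.rfibre ?y"
      then have c: "c \<in> G.C" "S.s e = S.r (P c)" using e by (auto simp: G.rfibre_iff S_composable_iff)
      then show "bar (f (P c) * g (S.m (S.iv (P c)) (S.iv e))) = conv_summand S P (star g) (star f) e c"
        using e S.iv_mult[OF e P_in[OF c(1)] c(2)] by (simp add: conv_summand_def tstar_def bar_mult)
    qed
    also have "\<dots> = lconv (star g) (star f) e"
      unfolding tconv_eq_fsum(2)[OF e, symmetric]
      by (rule tconv_eq_lconv(1)[OF star_in_steinberg[OF g] star_in_steinberg[OF f] global_section e])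
    finally show ?thesis .
  qed
qed

lemma star_algebra_on_lconv: "star_algebra_on A lconv star bar"
  unfolding star_algebra_on_def
  by (simp add: R_algebra_on_lconv star_in_steinberg star_star star_add star_smult star_lconv)

end

end

lemma R_algebra_on_cong:
  assumes "R_algebra_on A m" "\<And>f g. f \<in> A \<Longrightarrow> g \<in> A \<Longrightarrow> m' f g = m f g"
  shows "R_algebra_on A m'"
  using assms unfolding R_algebra_on_def by simp

lemma star_algebra_on_cong:
  assumes "star_algebra_on A m st bar" "\<And>f g. f \<in> A \<Longrightarrow> g \<in> A \<Longrightarrow> m' f g = m f g"
  shows "star_algebra_on A m' st bar"
  using assms R_algebra_on_cong[of A m m'] unfolding star_algebra_on_def R_algebra_on_def by simp

theorem proposition4p21:
  fixes G :: "'g tgroupoid" and S :: "'s tgroupoid" and T :: "'r::comm_ring_1 set"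
    and i :: "'g \<times> 'r \<Rightarrow> 's" and q :: "'s \<Rightarrow> 'g" and P :: "'g \<Rightarrow> 's"
  assumes "ample_groupoid G"
    and "unit_subgroup T"
    and "discrete_twist G T S i q"
    and "topologically_trivial G S q"
    and "continuous_global_section G S q P"
  shows "(\<forall>f\<in>twisted_steinberg G T S i q. \<forall>g\<in>twisted_steinberg G T S i q.
            \<forall>e\<in>gcarrier S. finite (conv_support G S q P f g e)) \<and>
         (\<forall>P'. continuous_global_section G S q P' \<longrightarrow>
            (\<forall>f\<in>twisted_steinberg G T S i q. \<forall>g\<in>twisted_steinberg G T S i q.
               tconv G S q P' f g = tconv G S q P f g)) \<and>
         (\<forall>f\<in>twisted_steinberg G T S i q. \<forall>g\<in>twisted_steinberg G T S i q.
            tconv G S q P f g \<in> twisted_steinberg G T S i q) \<and>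
         R_algebra_on (twisted_steinberg G T S i q) (tconv G S q P) \<and>
         (\<forall>bar. T_inverse_involution T bar \<longrightarrow>
            star_algebra_on (twisted_steinberg G T S i q) (tconv G S q P) (tstar S bar) bar)"
proof -
  interpret twist_with_section G T S i q P
    using assms by unfold_locales
  have tconv: "tconv G S q P' f g = lconv f g"
    if "continuous_global_section G S q P'" "f \<in> A" "g \<in> A" for P' f g
    using tconv_eq_lconv_fun that by blast
  show ?thesis
    using tconv_eq_lconv(2) global_section tconv lconv_in_steinberg
      R_algebra_on_cong[OF R_algebra_on_lconv] star_algebra_on_cong[OF star_algebra_on_lconv]
    by auto
qed

end
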